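(* Let $d\ge 1$, $1\le K\le d$, $p\in[1,\infty)$, and let $P_p(\mathbb{R}^d)$ be the set of Borel probability measures on $\mathbb{R}^d$ with finite $p$-th moment. Then the maximum $K$-sliced $p$-Wasserstein distance $\max\text{-}K\text{-}SW_p$ (defined in the context) is a metric on $P_p(\mathbb{R}^d)$: for all $\mu_1,\mu_2,\mu_3\in P_p(\mathbb{R}^d)$ it is nonnegative and finite, $\max\text{-}K\text{-}SW_p(\mu_1,\mu_2)=0$ if and only if $\mu_1=\mu_2$, it is symmetric, and $\max\text{-}K\text{-}SW_p(\mu_1,\mu_3)\le \max\text{-}K\text{-}SW_p(\mu_1,\mu_2)+\max\text{-}K\text{-}SW_p(\mu_2,\mu_3)$.
   Context: For $\theta\in\mathbb{S}^{d-1}$ (the unit sphere in $\mathbb{R}^d$) and a probability measure $\mu$ on $\mathbb{R}^d$, let $\mathcal{R}\mu(\cdot,\theta)$ denote the one-dimensional marginal (slice) of $\mu$ along $\theta$, i.e. the pushforward of $\mu$ under $x\mapsto\langle x,\theta\rangle$ (for a density $p$ this is the Radon transform $(\mathcal{R}p)(t,\theta)=\int_{\mathbb{R}^d}p(x)\delta(t-\langle x,\theta\rangle)\,dx$). $W_p$ denotes the $p$-Wasserstein distance between probability measures on $\mathbb{R}$: $W_p(\nu_1,\nu_2)=\inf_{\gamma\in\Pi(\nu_1,\nu_2)}\big(\mathbb{E}_{(x,y)\sim\gamma}|x-y|^p\big)^{1/p}$, where $\Pi(\nu_1,\nu_2)$ is the set of couplings. The maximum $K$-sliced $p$-Wasserstein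 distance is $$\max\text{-}K\text{-}SW_p(\mu_1,\mu_2)=\max_{\{\theta_1,\dots,\theta_K\}\ \text{orthonormal in }\mathbb{R}^d}\Big(\frac1K\sum_{k=1}^K W_p^p\big(\mathcal{R}\mu_1(\cdot,\theta_k),\mathcal{R}\mu_2(\cdot,\theta_k)\big)\Big)^{1/p}.$$ The maximum sliced $p$-Wasserstein distance is $\max\text{-}SW_p(\mu_1,\mu_2)=\max_{\theta\in\mathbb{S}^{d-1}}W_p(\mathcal{R}\mu_1(\cdot,\theta),\mathcal{R}\mu_2(\cdot,\theta))$ (the case $K=1$). *)

theory Defs
  imports "HOL-Probability.Probability"
begin

definition slice :: "'a::euclidean_space measure \<Rightarrow> 'a \<Rightarrow> real measure" where
  "slice \<mu> \<theta> = distr \<mu> borel (\<lambda>x. x \<bullet> \<theta>)"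

definition couplings :: "real measure \<Rightarrow> real measure \<Rightarrow> (real \<times> real) measure set" where
  "couplings \<nu>1 \<nu>2 = {\<gamma>. prob_space \<gamma> \<and> sets \<gamma> = sets (borel \<Otimes>\<^sub>M borel)
      \<and> distr \<gamma> borel fst = \<nu>1 \<and> distr \<gamma> borel snd = \<nu>2}"

definition Wpp :: "real \<Rightarrow> real measure \<Rightarrow> real measure \<Rightarrow> ennreal" where
  "Wpp p \<nu>1 \<nu>2 = (INF \<gamma>\<in>couplings \<nu>1 \<nu>2.
      \<integral>\<^sup>+ z. ennreal (\<bar>fst z - snd z\<bar> powr p) \<partial>\<gamma>)"

definition enn_root :: "real \<Rightarrow> ennreal \<Rightarrow> ennreal" where
  "enn_root p x = (if x = \<infinity> then \<infinity> else ennreal (enn2real x powr (1 / p)))"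

definition orthonormal_frame :: "nat \<Rightarrow> (nat \<Rightarrow> 'a::euclidean_space) \<Rightarrow> bool" where
  "orthonormal_frame K \<theta> \<longleftrightarrow> (\<forall>i<K. \<forall>j<K. \<theta> i \<bullet> \<theta> j = (if i = j then 1 else 0))"

definition max_K_SW :: "nat \<Rightarrow> real \<Rightarrow> 'a::euclidean_space measure \<Rightarrow> 'a measure \<Rightarrow> ennreal" where
  "max_K_SW K p \<mu>1 \<mu>2 = (SUP \<theta>\<in>{\<theta>. orthonormal_frame K \<theta>}.
      enn_root p ((\<Sum>k<K. Wpp p (slice \<mu>1 (\<theta> k)) (slice \<mu>2 (\<theta> k))) / of_nat K))"

definition P_p :: "real \<Rightarrow> 'a::euclidean_space measure set" where
  "P_p p = {\<mu>. prob_space \<mu> \<and> sets \<mu> = sets borel \<and>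
      (\<integral>\<^sup>+ x. ennreal (norm x powr p) \<partial>\<mu>) < \<infinity>}"

end

theory Submission
  imports Defs
begin

text \<open>On the real line \<open>W\<^sub>p\<close> is attained by the quantile coupling: \<open>\<bar>x - y\<bar> powr p\<close> is a
  mixture of indicators of the sets of pairs separated by an interval, and that coupling puts the
  least mass on each of them. Hence \<open>Wpp p \<nu>1 \<nu>2\<close> is the \<open>p\<close>-th power of the \<open>L\<^sup>p\<close> distance of
  the quantile functions on \<open>(0, 1)\<close>, and for a fixed frame the averaged sliced cost is the \<open>p\<close>-th
  power of an \<open>L\<^sup>p\<close> norm on \<open>{..<K} \<times> (0, 1)\<close>; symmetry, finiteness and, by Minkowski's
  inequality, the triangle inequality follow and survive the supremum over frames. If the distance
  vanishes, every unit vector starts an orthonormal \<open>K\<close>-frame, so all one-dimensional marginals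
  agree and the Cramer-Wold theorem gives \<open>\<mu>1 = \<mu>2\<close>.\<close>

section \<open>Optimality of the quantile coupling\<close>

definition uniform01 :: "real measure" where
  "uniform01 = restrict_space lborel {0<..<1}"

definition quantile :: "real measure \<Rightarrow> real \<Rightarrow> real" where
  "quantile \<nu> u = Inf {x. u \<le> cdf \<nu> x}"

lemma prob_space_uniform01: "prob_space uniform01"
  by (auto simp: uniform01_def emeasure_restrict_space space_restrict_space intro!: prob_spaceI)

lemma space_uniform01: "space uniform01 = {0<..<1}"
  by (simp add: uniform01_def space_restrict_space)

lemma sets_uniform01: "sets uniform01 = sets (restrict_space borel {0<..<1})"
  unfolding uniform01_def by (rule sets_restrict_space_cong) simp

lemma quantile_le_iff:
  assumes "real_distribution \<nu>" "0 < u" "u < 1"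
  shows "quantile \<nu> u \<le> x \<longleftrightarrow> u \<le> cdf \<nu> x"
proof -
  interpret cdf_distribution \<nu> using assms(1) by (simp add: cdf_distribution_def)
  show ?thesis using pseudoinverse[OF assms(2,3)] unfolding quantile_def by blast
qed

lemma measurable_quantile[measurable]:
  assumes "real_distribution \<nu>"
  shows "quantile \<nu> \<in> borel_measurable uniform01"
proof -
  interpret cdf_distribution \<nu> using assms(1) by (simp add: cdf_distribution_def)
  have "(\<lambda>u. Inf {x. u \<le> cdf \<nu> x}) \<in> borel_measurable (restrict_space borel {0<..<1})"
    by (rule measurable_CI)
  then show ?thesis
    unfolding quantile_def by (subst measurable_cong_sets[OF sets_uniform01 refl])
qed

lemma distr_quantile:
  assumes "real_distribution \<nu>"
  shows "distr uniform01 borel (quantile \<nu>) = \<nu>"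
proof -
  interpret cdf_distribution \<nu> using assms(1) by (simp add: cdf_distribution_def)
  show ?thesis using distr_I_eq_M unfolding uniform01_def quantile_def by simp
qed

lemma nn_integral_quantile:
  assumes "real_distribution \<nu>" "f \<in> borel_measurable borel"
  shows "(\<integral>\<^sup>+ u. f (quantile \<nu> u) \<partial>uniform01) = (\<integral>\<^sup>+ x. f x \<partial>\<nu>)"
  using assms by (subst (2) distr_quantile[OF assms(1), symmetric]) (simp add: nn_integral_distr)

definition quantile_coupling :: "real measure \<Rightarrow> real measure \<Rightarrow> (real \<times> real) measure" where
  "quantile_coupling \<nu>1 \<nu>2 =
     distr uniform01 (borel \<Otimes>\<^sub>M borel) (\<lambda>u. (quantile \<nu>1 u, quantile \<nu>2 u))"

lemma quantile_coupling_in_couplings: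
  assumes [measurable]: "real_distribution \<nu>1" "real_distribution \<nu>2"
  shows "quantile_coupling \<nu>1 \<nu>2 \<in> couplings \<nu>1 \<nu>2"
proof -
  interpret U: prob_space uniform01 by (rule prob_space_uniform01)
  have "prob_space (quantile_coupling \<nu>1 \<nu>2)"
    unfolding quantile_coupling_def by (rule U.prob_space_distr) measurable
  moreover have "distr (quantile_coupling \<nu>1 \<nu>2) borel fst = \<nu>1"
    unfolding quantile_coupling_def by (subst distr_distr) (simp_all add: comp_def distr_quantile[OF assms(1)])
  moreover have "distr (quantile_coupling \<nu>1 \<nu>2) borel snd = \<nu>2"
    unfolding quantile_coupling_def by (subst distr_distr) (simp_all add: comp_def distr_quantile[OF assms(2)])
  ultimately show ?thesis unfolding couplings_def quantile_coupling_def by simp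
qed

lemma nn_integral_quantile_coupling:
  assumes [measurable]: "real_distribution \<nu>1" "real_distribution \<nu>2"
    and [measurable]: "f \<in> borel_measurable (borel \<Otimes>\<^sub>M borel)"
  shows "(\<integral>\<^sup>+ z. f z \<partial>quantile_coupling \<nu>1 \<nu>2)
       = (\<integral>\<^sup>+ u. f (quantile \<nu>1 u, quantile \<nu>2 u) \<partial>uniform01)"
  unfolding quantile_coupling_def by (subst nn_integral_distr) simp_all

lemma Collect_in_sets_pair_borel:
  assumes "Measurable.pred (borel \<Otimes>\<^sub>M borel) P"
  shows "Collect P \<in> sets (borel \<Otimes>\<^sub>M borel)"
proof -
  have "{z \<in> space (borel \<Otimes>\<^sub>M borel). P z} \<in> sets (borel \<Otimes>\<^sub>M borel)"
    using assms by measurable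
  then show ?thesis by (simp add: space_pair_measure)
qed

lemma emeasure_quantile_coupling:
  assumes [measurable]: "real_distribution \<nu>1" "real_distribution \<nu>2"
    and [measurable]: "A \<in> sets (borel \<Otimes>\<^sub>M borel)"
  shows "emeasure (quantile_coupling \<nu>1 \<nu>2) A
       = emeasure uniform01 {u \<in> {0<..<1}. (quantile \<nu>1 u, quantile \<nu>2 u) \<in> A}"
  unfolding quantile_coupling_def by (subst emeasure_distr) (auto simp: space_uniform01 vimage_def Int_def conj_commute)

lemma emeasure_quantile_crossing_le:
  assumes "real_distribution \<nu>1" "real_distribution \<nu>2"
  shows "emeasure uniform01 {u \<in> {0<..<1}. quantile \<nu>1 u \<le> s \<and> t < quantile \<nu>2 u}
       \<le> ennreal (cdf \<nu>1 s - cdf \<nu>2 t)"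
proof -
  have "{u \<in> {0<..<1}. quantile \<nu>1 u \<le> s \<and> t < quantile \<nu>2 u} \<subseteq> {cdf \<nu>2 t <.. cdf \<nu>1 s}"
    using quantile_le_iff[OF assms(1)] quantile_le_iff[OF assms(2)] by (auto simp: not_le[symmetric])
  then have "emeasure uniform01 {u \<in> {0<..<1}. quantile \<nu>1 u \<le> s \<and> t < quantile \<nu>2 u}
      \<le> emeasure lborel {cdf \<nu>2 t <.. cdf \<nu>1 s}"
    unfolding uniform01_def by (subst emeasure_restrict_space) (auto intro!: emeasure_mono)
  also have "\<dots> \<le> ennreal (cdf \<nu>1 s - cdf \<nu>2 t)"
    by (cases "cdf \<nu>2 t \<le> cdf \<nu>1 s") auto
  finally show ?thesis .
qed

lemma (in prob_space) prob_diff_le_prob_crossing: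
  fixes X Y :: "'a \<Rightarrow> real"
  assumes [measurable]: "X \<in> borel_measurable M" "Y \<in> borel_measurable M"
  shows "prob {x \<in> space M. X x \<le> s} - prob {x \<in> space M. Y x \<le> t}
       \<le> prob {x \<in> space M. X x \<le> s \<and> t < Y x}"
proof -
  have ev: "{x \<in> space M. X x \<le> s \<and> t < Y x} \<in> events" "{x \<in> space M. Y x \<le> t} \<in> events"
    by measurable
  have "prob {x \<in> space M. X x \<le> s}
      \<le> prob ({x \<in> space M. X x \<le> s \<and> t < Y x} \<union> {x \<in> space M. Y x \<le> t})"
    using ev by (intro finite_measure_mono) (auto simp: not_le)
  also have "\<dots> \<le> prob {x \<in> space M. X x \<le> s \<and> t < Y x} + prob {x \<in> space M. Y x \<le> t}"
    using ev by (intro measure_Un_le)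
  finally show ?thesis by linarith
qed

lemma cdf_eq_measure_coupling:
  assumes "\<gamma> \<in> couplings \<nu>1 \<nu>2"
  shows "cdf \<nu>1 s = measure \<gamma> {z. fst z \<le> s}" "cdf \<nu>2 s = measure \<gamma> {z. snd z \<le> s}"
proof -
  have g: "sets \<gamma> = sets (borel \<Otimes>\<^sub>M borel)" "distr \<gamma> borel fst = \<nu>1" "distr \<gamma> borel snd = \<nu>2"
    using assms by (auto simp: couplings_def)
  have sp: "space \<gamma> = UNIV"
    using sets_eq_imp_space_eq[OF g(1)] by (simp add: space_pair_measure)
  have mf: "fst \<in> \<gamma> \<rightarrow>\<^sub>M borel" "snd \<in> \<gamma> \<rightarrow>\<^sub>M borel"
    by (simp_all add: measurable_cong_sets[OF g(1) refl])
  show "cdf \<nu>1 s = measure \<gamma> {z. fst z \<le> s}"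
    unfolding cdf_def g(2)[symmetric] using mf by (subst measure_distr) (auto simp: sp vimage_def)
  show "cdf \<nu>2 s = measure \<gamma> {z. snd z \<le> s}"
    unfolding cdf_def g(3)[symmetric] using mf by (subst measure_distr) (auto simp: sp vimage_def)
qed

text \<open>The marginals force mass at least \<open>cdf \<nu>1 s - cdf \<nu>2 t\<close> onto the crossing region, and the
  quantile coupling puts no more than that there.\<close>

lemma quantile_coupling_crossing_le:
  assumes d: "real_distribution \<nu>1" "real_distribution \<nu>2" and \<gamma>: "\<gamma> \<in> couplings \<nu>1 \<nu>2"
  shows "emeasure (quantile_coupling \<nu>1 \<nu>2) {z. fst z \<le> s \<and> t < snd z}
           \<le> emeasure \<gamma> {z. fst z \<le> s \<and> t < snd z}" (is ?fst_snd)
    and "emeasure (quantile_coupling \<nu>1 \<nu>2) {z. snd z \<le> s \<and> t < fst z}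
           \<le> emeasure \<gamma> {z. snd z \<le> s \<and> t < fst z}" (is ?snd_fst)
proof -
  have g: "prob_space \<gamma>" "sets \<gamma> = sets (borel \<Otimes>\<^sub>M borel)"
    using \<gamma> by (auto simp: couplings_def)
  interpret g: prob_space \<gamma> by fact
  have sp: "space \<gamma> = UNIV"
    using sets_eq_imp_space_eq[OF g(2)] by (simp add: space_pair_measure)
  have [measurable]: "fst \<in> borel_measurable \<gamma>" "snd \<in> borel_measurable \<gamma>"
    by (simp_all add: measurable_cong_sets[OF g(2) refl])
  have lower: "ennreal (cdf \<nu>1 s - cdf \<nu>2 t) \<le> emeasure \<gamma> {z. fst z \<le> s \<and> t < snd z}"
              "ennreal (cdf \<nu>2 s - cdf \<nu>1 t) \<le> emeasure \<gamma> {z. snd z \<le> s \<and> t < fst z}"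
    using g.prob_diff_le_prob_crossing[of fst snd s t] g.prob_diff_le_prob_crossing[of snd fst s t]
    by (auto simp: cdf_eq_measure_coupling[OF \<gamma>] sp g.emeasure_eq_measure intro!: ennreal_leI)
  show ?fst_snd
    using emeasure_quantile_crossing_le[OF d, of s t] lower(1)
    by (subst emeasure_quantile_coupling[OF d]) (auto intro: Collect_in_sets_pair_borel)
  show ?snd_fst
    using emeasure_quantile_crossing_le[OF d(2,1), of s t] lower(2)
    by (subst emeasure_quantile_coupling[OF d]) (auto simp: conj_commute intro: Collect_in_sets_pair_borel)
qed

lemma nn_integral_mixture_mono:
  fixes N :: "'b measure" and w :: "'b \<Rightarrow> ennreal" and D :: "'b \<Rightarrow> 'a set"
  assumes N: "sigma_finite_measure N"
    and \<gamma>1: "sigma_finite_measure \<gamma>1" "sets \<gamma>1 = sets \<Omega>"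
    and \<gamma>2: "sigma_finite_measure \<gamma>2" "sets \<gamma>2 = sets \<Omega>"
    and meas: "(\<lambda>(z, t). w t * indicator (D t) z) \<in> borel_measurable (\<Omega> \<Otimes>\<^sub>M N)"
    and D: "\<And>t. D t \<in> sets \<Omega>"
    and le: "\<And>t. w t \<noteq> 0 \<Longrightarrow> emeasure \<gamma>1 (D t) \<le> emeasure \<gamma>2 (D t)"
  shows "(\<integral>\<^sup>+ z. \<integral>\<^sup>+ t. w t * indicator (D t) z \<partial>N \<partial>\<gamma>1)
       \<le> (\<integral>\<^sup>+ z. \<integral>\<^sup>+ t. w t * indicator (D t) z \<partial>N \<partial>\<gamma>2)"
proof -
  have iterated: "(\<integral>\<^sup>+ z. \<integral>\<^sup>+ t. w t * indicator (D t) z \<partial>N \<partial>\<gamma>)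
      = (\<integral>\<^sup>+ t. w t * emeasure \<gamma> (D t) \<partial>N)"
    if "sigma_finite_measure \<gamma>" "sets \<gamma> = sets \<Omega>" for \<gamma>
  proof -
    interpret pair_sigma_finite \<gamma> N
      using that(1) N by (simp add: pair_sigma_finite_def)
    have m: "(\<lambda>(z, t). w t * indicator (D t) z) \<in> borel_measurable (\<gamma> \<Otimes>\<^sub>M N)"
      using meas by (subst measurable_cong_sets[OF sets_pair_measure_cong[OF that(2) refl] refl])
    have "(\<integral>\<^sup>+ z. \<integral>\<^sup>+ t. w t * indicator (D t) z \<partial>N \<partial>\<gamma>)
        = (\<integral>\<^sup>+ t. \<integral>\<^sup>+ z. w t * indicator (D t) z \<partial>\<gamma> \<partial>N)"
      using Fubini[OF m] by simp
    also have "\<dots> = (\<integral>\<^sup>+ t. w t * emeasure \<gamma> (D t) \<partial>N)"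
      using D that(2) by (intro nn_integral_cong) (simp add: nn_integral_cmult_indicator)
    finally show ?thesis .
  qed
  show ?thesis
    unfolding iterated[OF \<gamma>1] iterated[OF \<gamma>2]
    by (intro nn_integral_mono) (metis le mult_left_mono mult_zero_left zero_le order_refl)
qed

text \<open>\<open>layer_density p\<close> is the second derivative of \<open>\<lambda>r. r powr p\<close> on \<open>r > 0\<close>, so
  integrating it against the tent \<open>max 0 (a - r)\<close> recovers \<open>a powr p\<close> (Taylor's formula).\<close>

definition layer_density :: "real \<Rightarrow> real \<Rightarrow> real" where
  "layer_density p r = (if 0 < r then p * (p - 1) * r powr (p - 2) else 0)"

lemma borel_measurable_layer_density[measurable]: "layer_density p \<in> borel_measurable borel"
  unfolding layer_density_def by measurable

lemma layer_density_nonneg: "1 < p \<Longrightarrow> 0 \<le> layer_density p r"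
  by (simp add: layer_density_def)

lemma nn_integral_layer_density:
  assumes p: "1 < p" and a: "0 \<le> a"
  shows "(\<integral>\<^sup>+ r. ennreal (layer_density p r * max 0 (a - r)) \<partial>lborel) = ennreal (a powr p)"
proof -
  define f where "f r = p * (p - 1) * r powr (p - 2) * (a - r)" for r
  define G where "G r = p * a * r powr (p - 1) - (p - 1) * r powr p" for r
  have "continuous_on {0..a} G"
    unfolding G_def using p by (intro continuous_intros continuous_on_powr') auto
  moreover have "(G has_vector_derivative f r) (at r)" if r: "0 < r" for r
  proof -
    have "r powr (p - 1) = r powr (p - 2 + 1)" by simp
    also have "\<dots> = r powr (p - 2) * r"
      using r by (simp only: powr_add) simp
    finally have "r powr (p - 1) = r powr (p - 2) * r" .
    moreover have "(G has_real_derivative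
        p * a * ((p - 1) * r powr (p - 1 - 1)) - (p - 1) * (p * r powr (p - 1))) (at r)"
      unfolding G_def using r by (intro derivative_eq_intros has_real_derivative_powr) auto
    ultimately show ?thesis
      by (simp add: has_real_derivative_iff_has_vector_derivative f_def algebra_simps)
  qed
  ultimately have "(f has_integral (G a - G 0)) {0..a}"
    using a by (intro fundamental_theorem_of_calculus_interior) auto
  moreover have "G a - G 0 = a powr p"
  proof -
    have "a powr p = a powr 1 * a powr (p - 1)"
      using powr_add[of a 1 "p - 1"] by simp
    then have "a * a powr (p - 1) = a powr p"
      using a by simp
    then show ?thesis using p by (simp add: G_def algebra_simps)
  qed
  ultimately have f: "(f has_integral a powr p) {0..a}" by simp
  have "r \<in> {0..a} \<Longrightarrow> 0 \<le> f r" for r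
    using p by (simp add: f_def)
  then have "(\<integral>\<^sup>+ r. ennreal (indicator {0..a} r * f r) \<partial>lborel) = ennreal (a powr p)"
    using nn_integral_has_integral_lebesgue[OF _ f] by simp
  moreover have "layer_density p r * max 0 (a - r) = indicator {0..a} r * f r" for r
    unfolding layer_density_def f_def by (auto simp: indicator_def max_def)
  ultimately show ?thesis by simp
qed

definition straddle :: "real \<Rightarrow> real \<Rightarrow> (real \<times> real) set" where
  "straddle r s = {z. fst z \<le> s \<and> s + r < snd z} \<union> {z. snd z \<le> s \<and> s + r < fst z}"

lemma indicator_straddle:
  "indicator (straddle r s) z =
     of_bool (fst z \<le> s \<and> s + r < snd z \<or> snd z \<le> s \<and> s + r < fst z)"
  by (simp add: straddle_def indicator_def)

lemma straddle_in_sets[measurable]: "straddle r s \<in> sets (borel \<Otimes>\<^sub>M borel)"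
  unfolding straddle_def by (intro sets.Un Collect_in_sets_pair_borel) measurable

lemma emeasure_lborel_straddle:
  assumes "0 \<le> r"
  shows "emeasure lborel {s. z \<in> straddle r s} = ennreal (max 0 (\<bar>fst z - snd z\<bar> - r))"
proof (cases "fst z \<le> snd z")
  case True
  then have "{s. z \<in> straddle r s} = {fst z ..< snd z - r}"
    using assms by (auto simp: straddle_def)
  then show ?thesis using True by (cases "fst z \<le> snd z - r") (auto simp: max_def)
next
  case False
  then have "{s. z \<in> straddle r s} = {snd z ..< fst z - r}"
    using assms by (auto simp: straddle_def)
  then show ?thesis using False by (cases "snd z \<le> fst z - r") (auto simp: max_def)
qed

lemma nn_integral_indicator_straddle:
  assumes "0 \<le> r"
  shows "(\<integral>\<^sup>+ s. indicator (straddle r s) z \<partial>lborel) = ennreal (max 0 (\<bar>fst z - snd z\<bar> - r))"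
proof -
  have "{s. z \<in> straddle r s} =
      {s \<in> space lborel. fst z \<le> s \<and> s + r < snd z \<or> snd z \<le> s \<and> s + r < fst z}"
    by (auto simp: straddle_def)
  also have "\<dots> \<in> sets lborel" by measurable
  finally have "(\<integral>\<^sup>+ s. indicator {s. z \<in> straddle r s} s \<partial>lborel) = emeasure lborel {s. z \<in> straddle r s}"
    by (rule nn_integral_indicator)
  then show ?thesis
    using emeasure_lborel_straddle[OF assms] by (simp add: indicator_def)
qed

lemma powr_dist_eq_nn_integral_straddle:
  assumes p: "1 < p"
  shows "ennreal (\<bar>fst z - snd z\<bar> powr p) = (\<integral>\<^sup>+ t. ennreal (layer_density p (fst t))
           * indicator (straddle (fst t) (snd t)) z \<partial>(lborel \<Otimes>\<^sub>M lborel))"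
proof -
  have "(\<lambda>t. ennreal (layer_density p (fst t)) * indicator (straddle (fst t) (snd t)) z)
      \<in> borel_measurable (lborel \<Otimes>\<^sub>M lborel)"
    unfolding indicator_straddle by measurable
  then have "(\<integral>\<^sup>+ t. ennreal (layer_density p (fst t)) * indicator (straddle (fst t) (snd t)) z
        \<partial>(lborel \<Otimes>\<^sub>M lborel))
      = (\<integral>\<^sup>+ r. \<integral>\<^sup>+ s. ennreal (layer_density p r) * indicator (straddle r s) z \<partial>lborel \<partial>lborel)"
    by (simp add: lborel.nn_integral_fst[symmetric])
  also have "\<dots> = (\<integral>\<^sup>+ r. ennreal (layer_density p r * max 0 (\<bar>fst z - snd z\<bar> - r)) \<partial>lborel)"
  proof (rule nn_integral_cong)
    fix r :: real
    show "(\<integral>\<^sup>+ s. ennreal (layer_density p r) * indicator (straddle r s) z \<partial>lborel)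
        = ennreal (layer_density p r * max 0 (\<bar>fst z - snd z\<bar> - r))"
    proof (cases "0 < r")
      case True
      have "(\<lambda>s. indicator (straddle r s) z :: ennreal) \<in> borel_measurable lborel"
        unfolding indicator_straddle by measurable
      then show ?thesis
        using True p nn_integral_indicator_straddle[of r z]
        by (simp add: nn_integral_cmult ennreal_mult layer_density_nonneg)
    qed (simp add: layer_density_def)
  qed
  also have "\<dots> = ennreal (\<bar>fst z - snd z\<bar> powr p)"
    using p by (simp add: nn_integral_layer_density)
  finally show ?thesis ..
qed

lemma dist_eq_nn_integral_straddle:
  "ennreal \<bar>fst z - snd z\<bar> = (\<integral>\<^sup>+ s. 1 * indicator (straddle 0 s) z \<partial>lborel)"
  using nn_integral_indicator_straddle[of 0 z] by simp

lemma quantile_coupling_straddle_le: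
  assumes d: "real_distribution \<nu>1" "real_distribution \<nu>2" and \<gamma>: "\<gamma> \<in> couplings \<nu>1 \<nu>2"
    and r: "0 \<le> r"
  shows "emeasure (quantile_coupling \<nu>1 \<nu>2) (straddle r s) \<le> emeasure \<gamma> (straddle r s)"
proof -
  let ?A = "{z. fst z \<le> s \<and> s + r < snd z}" and ?B = "{z. snd z \<le> s \<and> s + r < fst z}"
  have AB: "?A \<in> sets (borel \<Otimes>\<^sub>M borel)" "?B \<in> sets (borel \<Otimes>\<^sub>M borel)" "?A \<inter> ?B = {}"
    using r by (auto intro: Collect_in_sets_pair_borel)
  have "sets (quantile_coupling \<nu>1 \<nu>2) = sets (borel \<Otimes>\<^sub>M borel)" "sets \<gamma> = sets (borel \<Otimes>\<^sub>M borel)"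
    using \<gamma> by (simp_all add: quantile_coupling_def couplings_def)
  with AB have split: "emeasure M (straddle r s) = emeasure M ?A + emeasure M ?B"
    if "M = quantile_coupling \<nu>1 \<nu>2 \<or> M = \<gamma>" for M
    using that unfolding straddle_def by (intro plus_emeasure[symmetric]) auto
  show ?thesis
    unfolding split[OF disjI1[OF refl]] split[OF disjI2[OF refl]]
    by (intro add_mono quantile_coupling_crossing_le[OF d \<gamma>])
qed

theorem quantile_coupling_optimal:
  assumes p: "1 \<le> p" and d: "real_distribution \<nu>1" "real_distribution \<nu>2"
    and \<gamma>: "\<gamma> \<in> couplings \<nu>1 \<nu>2"
  shows "(\<integral>\<^sup>+ z. ennreal (\<bar>fst z - snd z\<bar> powr p) \<partial>quantile_coupling \<nu>1 \<nu>2)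
       \<le> (\<integral>\<^sup>+ z. ennreal (\<bar>fst z - snd z\<bar> powr p) \<partial>\<gamma>)"
proof -
  have q: "quantile_coupling \<nu>1 \<nu>2 \<in> couplings \<nu>1 \<nu>2"
    by (rule quantile_coupling_in_couplings[OF d])
  have sf: "sigma_finite_measure M" "sets M = sets (borel \<Otimes>\<^sub>M borel)"
    if "M \<in> couplings \<nu>1 \<nu>2" for M
    using that by (simp_all add: couplings_def prob_space_imp_sigma_finite)
  show ?thesis
  proof (cases "p = 1")
    case True
    have dist: "ennreal (\<bar>fst z - snd z\<bar> powr p) = (\<integral>\<^sup>+ s. 1 * indicator (straddle 0 s) z \<partial>lborel)" for z
      using True dist_eq_nn_integral_straddle[of z] by simp
    show ?thesis
      unfolding dist by (rule nn_integral_mixture_mono[OF lborel.sigma_finite_measure_axioms sf[OF q] sf[OF \<gamma>]])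
         (auto simp: indicator_straddle quantile_coupling_straddle_le[OF d \<gamma>])
  next
    case False
    with p have p1: "1 < p" by simp
    have N: "sigma_finite_measure (lborel \<Otimes>\<^sub>M lborel :: (real \<times> real) measure)"
      by (intro sigma_finite_pair_measure lborel.sigma_finite_measure_axioms)
    show ?thesis
      unfolding powr_dist_eq_nn_integral_straddle[OF p1]
    proof (rule nn_integral_mixture_mono[OF N sf[OF q] sf[OF \<gamma>]])
      fix t :: "real \<times> real"
      assume "ennreal (layer_density p (fst t)) \<noteq> 0"
      then have "0 \<le> fst t" by (auto simp: layer_density_def split: if_splits)
      then show "emeasure (quantile_coupling \<nu>1 \<nu>2) (straddle (fst t) (snd t))
          \<le> emeasure \<gamma> (straddle (fst t) (snd t))"
        by (rule quantile_coupling_straddle_le[OF d \<gamma>])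
    qed (simp_all add: indicator_straddle)
  qed
qed

section \<open>Wasserstein distances on the line\<close>

lemma Wpp_eq_nn_integral_quantile:
  assumes p: "1 \<le> p" and d: "real_distribution \<nu>1" "real_distribution \<nu>2"
  shows "Wpp p \<nu>1 \<nu>2 = (\<integral>\<^sup>+ u. ennreal (\<bar>quantile \<nu>1 u - quantile \<nu>2 u\<bar> powr p) \<partial>uniform01)"
proof -
  have "Wpp p \<nu>1 \<nu>2 = (\<integral>\<^sup>+ z. ennreal (\<bar>fst z - snd z\<bar> powr p) \<partial>quantile_coupling \<nu>1 \<nu>2)"
    unfolding Wpp_def
    by (intro antisym INF_lower INF_greatest quantile_coupling_in_couplings[OF d]
        quantile_coupling_optimal[OF p d])
  then show ?thesis
    by (simp add: nn_integral_quantile_coupling[OF d])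
qed

lemma Wpp_commute:
  assumes "1 \<le> p" "real_distribution \<nu>1" "real_distribution \<nu>2"
  shows "Wpp p \<nu>1 \<nu>2 = Wpp p \<nu>2 \<nu>1"
  using assms by (simp add: Wpp_eq_nn_integral_quantile abs_minus_commute)

lemma Wpp_self:
  assumes "1 \<le> p" "real_distribution \<nu>"
  shows "Wpp p \<nu> \<nu> = 0"
  using assms by (simp add: Wpp_eq_nn_integral_quantile)

lemma Wpp_eq_0_imp_eq:
  assumes p: "1 \<le> p" and d: "real_distribution \<nu>1" "real_distribution \<nu>2"
    and "Wpp p \<nu>1 \<nu>2 = 0"
  shows "\<nu>1 = \<nu>2"
proof -
  have [measurable]: "quantile \<nu>1 \<in> borel_measurable uniform01" "quantile \<nu>2 \<in> borel_measurable uniform01"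
    using d by simp_all
  have "(\<integral>\<^sup>+ u. ennreal (\<bar>quantile \<nu>1 u - quantile \<nu>2 u\<bar> powr p) \<partial>uniform01) = 0"
    using assms by (simp add: Wpp_eq_nn_integral_quantile)
  then have "AE u in uniform01. ennreal (\<bar>quantile \<nu>1 u - quantile \<nu>2 u\<bar> powr p) = 0"
    by (subst (asm) nn_integral_0_iff_AE) auto
  then have "AE u in uniform01. quantile \<nu>1 u = quantile \<nu>2 u"
    by eventually_elim simp
  then have "distr uniform01 borel (quantile \<nu>1) = distr uniform01 borel (quantile \<nu>2)"
    by (intro distr_cong_AE) simp_all
  then show ?thesis by (simp add: distr_quantile d)
qed

lemma convex_on_powr_nonneg:
  assumes p: "1 \<le> p"
  shows "convex_on {0..} (\<lambda>x::real. x powr p)"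
proof
  have sub: "s powr p \<le> s" if "0 \<le> s" "s \<le> 1" for s :: real
  proof (cases "s = 0")
    case False
    then have "s powr p \<le> s powr 1" using that p by (intro powr_mono') auto
    then show ?thesis using that by simp
  qed simp
  fix t x y :: real
  assume t: "0 < t" "t < 1" and xy: "x \<in> {0..}" "y \<in> {0..}"
  consider "x = 0" | "y = 0" | "x \<in> {0<..}" "y \<in> {0<..}" using xy by fastforce
  then show "((1 - t) *\<^sub>R x + t *\<^sub>R y) powr p \<le> (1 - t) * x powr p + t * y powr p"
  proof cases
    case 1
    have "(t * y) powr p = t powr p * y powr p" using t xy by (simp add: powr_mult)
    also have "\<dots> \<le> t * y powr p" using sub t by (intro mult_right_mono) auto
    finally show ?thesis using 1 by simp
  next
    case 2
    have "((1 - t) * x) powr p = (1 - t) powr p * x powr p" using t xy by (simp add: powr_mult)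
    also have "\<dots> \<le> (1 - t) * x powr p" using sub t by (intro mult_right_mono) auto
    finally show ?thesis using 2 by simp
  next
    case 3
    then show ?thesis using convex_onD[OF powr_convex[OF p], of t x y] t by simp
  qed
qed simp

text \<open>Convexity of \<open>\<lambda>x. x powr p\<close> with weights \<open>a/(a+b)\<close> and \<open>b/(a+b)\<close>: choosing \<open>a\<close>, \<open>b\<close>
  as the norms of two functions, integration yields Minkowski's inequality.\<close>

lemma abs_add_powr_le:
  fixes x y a b :: real
  assumes p: "1 \<le> p" and a: "0 < a" and b: "0 < b"
  shows "\<bar>x + y\<bar> powr p
       \<le> ((a + b) / a) powr (p - 1) * \<bar>x\<bar> powr p + ((a + b) / b) powr (p - 1) * \<bar>y\<bar> powr p"
proof -
  define t where "t = b / (a + b)"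
  have t: "0 \<le> t" "t \<le> 1" "1 - t = a / (a + b)"
    using a b by (auto simp: t_def field_simps)
  have weight: "c / (a + b) * ((a + b) / c) powr p = ((a + b) / c) powr (p - 1)" if "0 < c" for c
    using that a b by (simp add: powr_diff)
  have "(1 - t) * ((a + b) / a * \<bar>x\<bar>) = \<bar>x\<bar>"
    using a b by (simp add: t(3))
  moreover have "t * ((a + b) / b * \<bar>y\<bar>) = \<bar>y\<bar>"
    using a b by (simp add: t_def)
  ultimately have split: "\<bar>x\<bar> + \<bar>y\<bar> = (1 - t) * ((a + b) / a * \<bar>x\<bar>) + t * ((a + b) / b * \<bar>y\<bar>)"
    by simp
  have "\<bar>x + y\<bar> powr p \<le> (\<bar>x\<bar> + \<bar>y\<bar>) powr p"
    using p by (intro powr_mono2) auto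
  also have "\<bar>x\<bar> + \<bar>y\<bar> = (1 - t) * ((a + b) / a * \<bar>x\<bar>) + t * ((a + b) / b * \<bar>y\<bar>)"
    by (rule split)
  also have "\<dots> powr p \<le> (1 - t) * ((a + b) / a * \<bar>x\<bar>) powr p + t * ((a + b) / b * \<bar>y\<bar>) powr p"
    using convex_onD[OF convex_on_powr_nonneg[OF p] t(1,2), of "(a + b) / a * \<bar>x\<bar>" "(a + b) / b * \<bar>y\<bar>"] a b
    by simp
  also have "(1 - t) * ((a + b) / a * \<bar>x\<bar>) powr p = ((a + b) / a) powr (p - 1) * \<bar>x\<bar> powr p"
    using a b powr_mult[of "(a + b) / a" "\<bar>x\<bar>" p] by (simp add: t(3) mult.assoc flip: weight[OF a])
  also have "t * ((a + b) / b * \<bar>y\<bar>) powr p = ((a + b) / b) powr (p - 1) * \<bar>y\<bar> powr p"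
    using a b powr_mult[of "(a + b) / b" "\<bar>y\<bar>" p] by (simp add: t_def mult.assoc flip: weight[OF b])
  finally show ?thesis .
qed

lemma Wpp_le_moments:
  assumes p: "1 \<le> p" and d: "real_distribution \<nu>1" "real_distribution \<nu>2"
  shows "Wpp p \<nu>1 \<nu>2 \<le> ennreal (2 powr (p - 1))
           * ((\<integral>\<^sup>+ x. ennreal (\<bar>x\<bar> powr p) \<partial>\<nu>1) + (\<integral>\<^sup>+ x. ennreal (\<bar>x\<bar> powr p) \<partial>\<nu>2))"
proof -
  let ?C = "2 powr (p - 1)"
  have [measurable]: "quantile \<nu>1 \<in> borel_measurable uniform01" "quantile \<nu>2 \<in> borel_measurable uniform01"
    using d by simp_all
  have "\<bar>x - y\<bar> powr p \<le> ?C * \<bar>x\<bar> powr p + ?C * \<bar>y\<bar> powr p" for x y :: real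
    using abs_add_powr_le[OF p, of 1 1 x "- y"] by simp
  then have "Wpp p \<nu>1 \<nu>2 \<le> (\<integral>\<^sup>+ u. ennreal ?C * ennreal (\<bar>quantile \<nu>1 u\<bar> powr p)
      + ennreal ?C * ennreal (\<bar>quantile \<nu>2 u\<bar> powr p) \<partial>uniform01)"
    unfolding Wpp_eq_nn_integral_quantile[OF p d]
    by (intro nn_integral_mono) (simp flip: ennreal_mult ennreal_plus del: ennreal_plus)
  also have "\<dots> = ennreal ?C * ((\<integral>\<^sup>+ x. ennreal (\<bar>x\<bar> powr p) \<partial>\<nu>1) + (\<integral>\<^sup>+ x. ennreal (\<bar>x\<bar> powr p) \<partial>\<nu>2))"
    using nn_integral_quantile[OF d(1), of "\<lambda>x. ennreal (\<bar>x\<bar> powr p)"]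
      nn_integral_quantile[OF d(2), of "\<lambda>x. ennreal (\<bar>x\<bar> powr p)"]
    by (simp add: nn_integral_add nn_integral_cmult distrib_left)
  finally show ?thesis .
qed

lemma Minkowski_sum_nn_integral:
  fixes f g :: "'i \<Rightarrow> 'm \<Rightarrow> real" and c :: ennreal
  assumes p: "1 \<le> p" and a: "0 < a" and b: "0 < b"
    and [measurable]: "\<And>i. f i \<in> borel_measurable M" "\<And>i. g i \<in> borel_measurable M"
    and f: "c * (\<Sum>i\<in>I. \<integral>\<^sup>+ x. ennreal (\<bar>f i x\<bar> powr p) \<partial>M) \<le> ennreal (a powr p)"
    and g: "c * (\<Sum>i\<in>I. \<integral>\<^sup>+ x. ennreal (\<bar>g i x\<bar> powr p) \<partial>M) \<le> ennreal (b powr p)"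
  shows "c * (\<Sum>i\<in>I. \<integral>\<^sup>+ x. ennreal (\<bar>f i x + g i x\<bar> powr p) \<partial>M) \<le> ennreal ((a + b) powr p)"
proof -
  define \<alpha> where "\<alpha> = ((a + b) / a) powr (p - 1)"
  define \<beta> where "\<beta> = ((a + b) / b) powr (p - 1)"
  let ?F = "\<Sum>i\<in>I. \<integral>\<^sup>+ x. ennreal (\<bar>f i x\<bar> powr p) \<partial>M"
  let ?G = "\<Sum>i\<in>I. \<integral>\<^sup>+ x. ennreal (\<bar>g i x\<bar> powr p) \<partial>M"
  have weight: "((a + b) / d) powr (p - 1) * d powr p = (a + b) powr (p - 1) * d" if "0 < d" for d
    using that a b by (simp add: powr_divide powr_diff)
  have "(\<Sum>i\<in>I. \<integral>\<^sup>+ x. ennreal (\<bar>f i x + g i x\<bar> powr p) \<partial>M)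
      \<le> (\<Sum>i\<in>I. \<integral>\<^sup>+ x. ennreal \<alpha> * ennreal (\<bar>f i x\<bar> powr p) + ennreal \<beta> * ennreal (\<bar>g i x\<bar> powr p) \<partial>M)"
    using abs_add_powr_le[OF p a b]
    by (intro sum_mono nn_integral_mono)
       (simp add: \<alpha>_def \<beta>_def flip: ennreal_mult ennreal_plus del: ennreal_plus)
  also have "\<dots> = ennreal \<alpha> * ?F + ennreal \<beta> * ?G"
    by (simp add: nn_integral_add nn_integral_cmult sum.distrib sum_distrib_left)
  finally have "c * (\<Sum>i\<in>I. \<integral>\<^sup>+ x. ennreal (\<bar>f i x + g i x\<bar> powr p) \<partial>M)
      \<le> ennreal \<alpha> * (c * ?F) + ennreal \<beta> * (c * ?G)"
    by (rule order_trans[OF mult_left_mono]) (simp_all add: algebra_simps)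
  also have "\<dots> \<le> ennreal \<alpha> * ennreal (a powr p) + ennreal \<beta> * ennreal (b powr p)"
    by (intro add_mono mult_left_mono f g) simp_all
  also have "\<dots> = ennreal ((a + b) powr (p - 1) * (a + b))"
    using a b by (simp add: \<alpha>_def \<beta>_def weight distrib_left flip: ennreal_mult ennreal_plus del: ennreal_plus)
  also have "(a + b) powr (p - 1) * (a + b) = (a + b) powr p"
    using a b by (simp add: powr_diff)
  finally show ?thesis .
qed

section \<open>The Cramer-Wold theorem\<close>

inductive_set trig_polys :: "('a::euclidean_space \<Rightarrow> real) set" where
  trig_cos: "(\<lambda>x. cos (x \<bullet> \<theta>)) \<in> trig_polys"
| trig_sin: "(\<lambda>x. sin (x \<bullet> \<theta>)) \<in> trig_polys"
| trig_add: "f \<in> trig_polys \<Longrightarrow> g \<in> trig_polys \<Longrightarrow> (\<lambda>x. f x + g x) \<in> trig_polys"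
| trig_cmult: "f \<in> trig_polys \<Longrightarrow> (\<lambda>x. c * f x) \<in> trig_polys"

lemma trig_polys_const: "(\<lambda>x. c) \<in> trig_polys"
  using trig_cmult[OF trig_cos[of 0], of c] by simp

lemma trig_polys_sum:
  "finite I \<Longrightarrow> (\<And>i. i \<in> I \<Longrightarrow> f i \<in> trig_polys) \<Longrightarrow> (\<lambda>x. \<Sum>i\<in>I. f i x) \<in> trig_polys"
proof (induction I rule: finite_induct)
  case empty
  then show ?case using trig_polys_const[of 0] by simp
next
  case (insert i I)
  then show ?case by (simp add: trig_add)
qed

lemma trig_polys_mult_cos_sin:
  assumes g: "g \<in> trig_polys" and b: "f = (\<lambda>x. cos (x \<bullet> \<theta>)) \<or> f = (\<lambda>x. sin (x \<bullet> \<theta>))"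
  shows "(\<lambda>x. f x * g x) \<in> trig_polys"
  using g
proof induction
  case (trig_cos \<eta>)
  from b show ?case
  proof
    assume f: "f = (\<lambda>x. cos (x \<bullet> \<theta>))"
    have "(\<lambda>x. f x * cos (x \<bullet> \<eta>)) = (\<lambda>x. (1/2) * cos (x \<bullet> (\<theta> - \<eta>)) + (1/2) * cos (x \<bullet> (\<theta> + \<eta>)))"
      by (simp add: f cos_times_cos inner_diff_right inner_add_right add_divide_distrib diff_divide_distrib)
    then show ?thesis by (simp only:) (intro trig_add trig_cmult trig_polys.trig_cos)
  next
    assume f: "f = (\<lambda>x. sin (x \<bullet> \<theta>))"
    have "(\<lambda>x. f x * cos (x \<bullet> \<eta>)) = (\<lambda>x. (1/2) * sin (x \<bullet> (\<theta> + \<eta>)) + (1/2) * sin (x \<bullet> (\<theta> - \<eta>)))"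
      by (simp add: f sin_times_cos inner_diff_right inner_add_right add_divide_distrib diff_divide_distrib)
    then show ?thesis by (simp only:) (intro trig_add trig_cmult trig_polys.trig_sin)
  qed
next
  case (trig_sin \<eta>)
  from b show ?case
  proof
    assume f: "f = (\<lambda>x. cos (x \<bullet> \<theta>))"
    have "(\<lambda>x. f x * sin (x \<bullet> \<eta>)) = (\<lambda>x. (1/2) * sin (x \<bullet> (\<theta> + \<eta>)) + (-1/2) * sin (x \<bullet> (\<theta> - \<eta>)))"
      by (simp add: f cos_times_sin inner_diff_right inner_add_right add_divide_distrib diff_divide_distrib)
    then show ?thesis by (simp only:) (intro trig_add trig_cmult trig_polys.trig_sin)
  next
    assume f: "f = (\<lambda>x. sin (x \<bullet> \<theta>))"
    have "(\<lambda>x. f x * sin (x \<bullet> \<eta>)) = (\<lambda>x. (1/2) * cos (x \<bullet> (\<theta> - \<eta>)) + (-1/2) * cos (x \<bullet> (\<theta> + \<eta>)))"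
      by (simp add: f sin_times_sin inner_diff_right inner_add_right add_divide_distrib diff_divide_distrib)
    then show ?thesis by (simp only:) (intro trig_add trig_cmult trig_polys.trig_cos)
  qed
next
  case (trig_add g1 g2)
  have "(\<lambda>x. f x * (g1 x + g2 x)) = (\<lambda>x. f x * g1 x + f x * g2 x)" by (simp add: algebra_simps)
  then show ?case using trig_add by (simp add: trig_polys.trig_add)
next
  case (trig_cmult g c)
  have "(\<lambda>x. f x * (c * g x)) = (\<lambda>x. c * (f x * g x))" by (simp add: algebra_simps)
  then show ?case using trig_cmult by (simp add: trig_polys.trig_cmult)
qed

lemma trig_polys_mult:
  assumes "f \<in> trig_polys" "g \<in> trig_polys"
  shows "(\<lambda>x. f x * g x) \<in> trig_polys"
  using assms(1)
proof induction
  case (trig_add f1 f2)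
  have "(\<lambda>x. (f1 x + f2 x) * g x) = (\<lambda>x. f1 x * g x + f2 x * g x)"
    by (simp add: algebra_simps)
  then show ?case using trig_add by (simp add: trig_polys.trig_add)
next
  case (trig_cmult f c)
  have "(\<lambda>x. (c * f x) * g x) = (\<lambda>x. c * (f x * g x))"
    by (simp add: algebra_simps)
  then show ?case using trig_cmult by (simp add: trig_polys.trig_cmult)
qed (use trig_polys_mult_cos_sin[OF assms(2)] in blast)+

lemma trig_polys_bounded_continuous:
  assumes "f \<in> trig_polys"
  shows "continuous_on UNIV f \<and> (\<exists>B. \<forall>x. \<bar>f x\<bar> \<le> B)"
  using assms
proof induction
  case (trig_add f g)
  then obtain B1 B2 where "\<forall>x. \<bar>f x\<bar> \<le> B1" "\<forall>x. \<bar>g x\<bar> \<le> B2" by blast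
  then have "\<forall>x. \<bar>f x + g x\<bar> \<le> B1 + B2"
    by (auto intro: order_trans[OF abs_triangle_ineq add_mono])
  then show ?case using trig_add by (auto intro!: continuous_intros)
next
  case (trig_cmult f c)
  then obtain B where "\<forall>x. \<bar>f x\<bar> \<le> B" by blast
  then have "\<forall>x. \<bar>c * f x\<bar> \<le> \<bar>c\<bar> * B" by (simp add: abs_mult mult_left_mono)
  then show ?case using trig_cmult by (auto intro!: continuous_intros)
qed (auto intro!: continuous_intros exI[of _ 1])

lemma integrable_bounded_continuous:
  fixes f :: "'a::topological_space \<Rightarrow> real"
  assumes "finite_measure \<mu>" "sets \<mu> = sets borel" "continuous_on UNIV f" "\<And>x. \<bar>f x\<bar> \<le> B"
  shows "integrable \<mu> f"
proof -
  interpret finite_measure \<mu> by fact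
  have "f \<in> borel_measurable \<mu>"
    using borel_measurable_continuous_onI[OF assms(3)] by (simp add: measurable_cong_sets[OF assms(2)])
  then show ?thesis using assms(4) by (intro integrable_const_bound[of f B]) auto
qed

lemma slice_eq_if_unit_slices_eq:
  fixes \<mu>1 \<mu>2 :: "'a::euclidean_space measure"
  assumes "\<And>u. norm u = 1 \<Longrightarrow> slice \<mu>1 u = slice \<mu>2 u"
    and "sets \<mu>1 = sets borel" "sets \<mu>2 = sets borel"
  shows "slice \<mu>1 \<theta> = slice \<mu>2 \<theta>"
proof -
  obtain b :: 'a where b: "b \<in> Basis" using nonempty_Basis by blast
  define u where "u = (if \<theta> = 0 then b else \<theta> /\<^sub>R norm \<theta>)"
  have "norm u = 1" using b by (auto simp: u_def)
  have rescale: "slice \<mu> \<theta> = distr (slice \<mu> u) borel (\<lambda>t. norm \<theta> * t)"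
    if "sets \<mu> = sets borel" for \<mu> :: "'a measure"
  proof -
    have "(\<lambda>x. x \<bullet> \<theta>) = (\<lambda>t. norm \<theta> * t) \<circ> (\<lambda>x. x \<bullet> u)"
      by (auto simp: u_def fun_eq_iff)
    moreover have "(\<lambda>x. x \<bullet> u) \<in> \<mu> \<rightarrow>\<^sub>M borel"
      by (simp add: measurable_cong_sets[OF that])
    ultimately show ?thesis
      unfolding slice_def by (simp add: distr_distr)
  qed
  show ?thesis using rescale assms \<open>norm u = 1\<close> by simp
qed

lemma integral_comp_inner:
  fixes \<mu> :: "'a::euclidean_space measure" and g :: "real \<Rightarrow> real"
  assumes "sets \<mu> = sets borel" "g \<in> borel_measurable borel"
  shows "(\<integral>x. g (x \<bullet> \<theta>) \<partial>\<mu>) = (\<integral>t. g t \<partial>slice \<mu> \<theta>)"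
proof -
  have "(\<lambda>x. x \<bullet> \<theta>) \<in> \<mu> \<rightarrow>\<^sub>M borel"
    by (simp add: measurable_cong_sets[OF assms(1)])
  then show ?thesis unfolding slice_def using assms(2) by (subst integral_distr) auto
qed

lemma integral_trig_poly_eq:
  fixes \<mu>1 \<mu>2 :: "'a::euclidean_space measure"
  assumes slices: "\<And>\<theta>. slice \<mu>1 \<theta> = slice \<mu>2 \<theta>"
    and \<mu>: "prob_space \<mu>1" "sets \<mu>1 = sets borel" "prob_space \<mu>2" "sets \<mu>2 = sets borel"
    and "f \<in> trig_polys"
  shows "(\<integral>x. f x \<partial>\<mu>1) = (\<integral>x. f x \<partial>\<mu>2)"
  using assms(6)
proof induction
  case (trig_add f g)
  have "integrable \<mu> f" "integrable \<mu> g" if "prob_space \<mu>" "sets \<mu> = sets borel" for \<mu>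
    using trig_polys_bounded_continuous[OF trig_add.hyps(1)]
      trig_polys_bounded_continuous[OF trig_add.hyps(2)] that
    by (auto intro: integrable_bounded_continuous prob_space.finite_measure)
  then show ?case using trig_add.IH \<mu> by simp
qed (simp_all add: integral_comp_inner \<mu> slices)

text \<open>\<open>torus_embedding c\<close> sends \<open>x\<close> to the point \<open>(cos (c x\<^sub>i), sin (c x\<^sub>i))\<^sub>i\<close> of a torus:
  it has compact image, is injective on the open cube of half-side \<open>pi / c\<close>, and polynomials
  in its coordinates are trigonometric polynomials in \<open>x\<close>.\<close>

definition torus_embedding :: "real \<Rightarrow> 'a::euclidean_space \<Rightarrow> 'a \<times> 'a" where
  "torus_embedding c x =
     ((\<Sum>i\<in>Basis. cos (c * (x \<bullet> i)) *\<^sub>R i), (\<Sum>i\<in>Basis. sin (c * (x \<bullet> i)) *\<^sub>R i))"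

lemma inner_torus_embedding:
  assumes "i \<in> Basis"
  shows "fst (torus_embedding c x) \<bullet> i = cos (c * (x \<bullet> i))"
    and "snd (torus_embedding c x) \<bullet> i = sin (c * (x \<bullet> i))"
  using assms
  by (simp_all add: torus_embedding_def inner_sum_left inner_Basis if_distrib sum.delta cong: if_cong)

lemma continuous_on_torus_embedding: "continuous_on UNIV (torus_embedding c)"
  unfolding torus_embedding_def by (intro continuous_intros)

lemma torus_embedding_in_cball:
  fixes x :: "'a::euclidean_space"
  shows "torus_embedding c x \<in> cball 0 (2 * real DIM('a))"
proof -
  have bound: "norm (\<Sum>i\<in>Basis. f (c * (x \<bullet> i)) *\<^sub>R i) \<le> real DIM('a)"
    if "\<And>t. \<bar>f t\<bar> \<le> 1" for f :: "real \<Rightarrow> real"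
  proof -
    have "norm (\<Sum>i\<in>Basis. f (c * (x \<bullet> i)) *\<^sub>R i) \<le> (\<Sum>i\<in>(Basis::'a set). norm (f (c * (x \<bullet> i)) *\<^sub>R i))"
      by (rule norm_sum)
    also have "\<dots> \<le> (\<Sum>i\<in>(Basis::'a set). 1)"
      by (rule sum_mono) (simp add: that)
    finally show ?thesis by simp
  qed
  have "norm (torus_embedding c x) \<le> norm (fst (torus_embedding c x)) + norm (snd (torus_embedding c x))"
    by (metis norm_Pair_le prod.collapse)
  also have "\<dots> \<le> real DIM('a) + real DIM('a)"
    unfolding torus_embedding_def fst_conv snd_conv by (intro add_mono bound) auto
  finally show ?thesis by simp
qed

lemma polynomial_comp_torus_embedding:
  assumes "real_polynomial_function g"
  shows "(\<lambda>x. g (torus_embedding c x :: 'a::euclidean_space \<times> 'a)) \<in> trig_polys"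
  using assms
proof induction
  case (linear g)
  then have "linear g" by (rule bounded_linear.linear)
  have "linear (\<lambda>y::'a. (y, 0 :: 'a))" "linear (\<lambda>y::'a. (0 :: 'a, y))"
    by (simp_all add: linear_iff)
  then have lin: "linear (\<lambda>y. g (y, 0))" "linear (\<lambda>y. g (0, y))"
    using linear_compose[OF _ \<open>linear g\<close>] by (simp_all add: o_def)
  have decomp: "g z = (\<Sum>i\<in>Basis. (fst z \<bullet> i) * g (i, 0)) + (\<Sum>i\<in>Basis. (snd z \<bullet> i) * g (0, i))"
    for z
  proof -
    have "g z = g (fst z, 0) + g (0, snd z)"
      using linear_add[OF \<open>linear g\<close>, of "(fst z, 0)" "(0, snd z)"] by simp
    then show ?thesis
      using Linear_Algebra.linear_componentwise[OF lin(1), of "fst z" 1]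
        Linear_Algebra.linear_componentwise[OF lin(2), of "snd z" 1] by simp
  qed
  have "g (torus_embedding c x) = (\<Sum>i\<in>Basis. g (i, 0) * cos (x \<bullet> (c *\<^sub>R i)))
      + (\<Sum>i\<in>Basis. g (0, i) * sin (x \<bullet> (c *\<^sub>R i)))" for x
    unfolding decomp[of "torus_embedding c x"]
    by (auto simp: inner_torus_embedding mult.commute intro!: sum.cong)
  then show ?case
    by (simp only: fun_eq_iff) (intro trig_add trig_polys_sum finite_Basis trig_cmult trig_cos trig_sin)
next
  case (const c)
  then show ?case by (rule trig_polys_const)
next
  case (add f g)
  then show ?case by (intro trig_add)
next
  case (mult f g)
  then show ?case by (intro trig_polys_mult)
qed

lemma (in prob_space) abs_integral_diff_le:
  fixes f g :: "'a \<Rightarrow> real"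
  assumes "integrable M f" "integrable M g" "\<And>x. \<bar>f x - g x\<bar> \<le> e"
  shows "\<bar>(\<integral>x. f x \<partial>M) - (\<integral>x. g x \<partial>M)\<bar> \<le> e"
proof -
  have "\<bar>(\<integral>x. f x \<partial>M) - (\<integral>x. g x \<partial>M)\<bar> = \<bar>\<integral>x. f x - g x \<partial>M\<bar>"
    using assms(1,2) by simp
  also have "\<dots> \<le> (\<integral>x. \<bar>f x - g x\<bar> \<partial>M)"
    using integral_norm_bound[of M "\<lambda>x. f x - g x"] by simp
  also have "\<dots> \<le> (\<integral>x. e \<partial>M)"
    using assms by (intro integral_mono) auto
  also have "\<dots> = e" by (simp add: prob_space)
  finally show ?thesis .
qed

lemma integral_continuous_comp_eq_if_polynomial:
  fixes \<Phi> :: "'a::topological_space \<Rightarrow> 'b::euclidean_space" and F :: "'b \<Rightarrow> real"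
  assumes \<mu>: "prob_space \<mu>1" "sets \<mu>1 = sets borel" "prob_space \<mu>2" "sets \<mu>2 = sets borel"
    and \<Phi>: "continuous_on UNIV \<Phi>" "compact S" "\<And>x. \<Phi> x \<in> S"
    and poly: "\<And>g. real_polynomial_function g \<Longrightarrow> (\<integral>x. g (\<Phi> x) \<partial>\<mu>1) = (\<integral>x. g (\<Phi> x) \<partial>\<mu>2)"
    and F: "continuous_on UNIV F"
  shows "(\<integral>x. F (\<Phi> x) \<partial>\<mu>1) = (\<integral>x. F (\<Phi> x) \<partial>\<mu>2)"
proof -
  have integrable: "integrable \<mu> (\<lambda>x. f (\<Phi> x))"
    if "prob_space \<mu>" "sets \<mu> = sets borel" "continuous_on UNIV f" for \<mu> and f :: "'b \<Rightarrow> real"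
  proof -
    have "bounded (f ` S)"
      using \<Phi>(2) that(3) by (intro compact_imp_bounded compact_continuous_image) (auto intro: continuous_on_subset)
    then obtain B where "\<And>y. y \<in> S \<Longrightarrow> \<bar>f y\<bar> \<le> B"
      by (auto simp: bounded_iff)
    then show ?thesis
      using that \<Phi>(1,3) continuous_on_compose2[OF that(3) \<Phi>(1)]
      by (intro integrable_bounded_continuous[of _ _ B]) (auto intro: prob_space.finite_measure)
  qed
  have near: "\<bar>(\<integral>x. F (\<Phi> x) \<partial>\<mu>) - (\<integral>x. g (\<Phi> x) \<partial>\<mu>)\<bar> \<le> e"
    if "prob_space \<mu>" "sets \<mu> = sets borel" "real_polynomial_function g"
      "\<And>y. y \<in> S \<Longrightarrow> \<bar>F y - g y\<bar> < e" for \<mu> g e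
    using integrable[OF that(1,2)] F that(3) that(4)[OF \<Phi>(3)]
    by (intro prob_space.abs_integral_diff_le[OF that(1)] less_imp_le)
       (auto simp: real_polynomial_function_eq continuous_on_polymonial_function)
  have approx: "\<bar>(\<integral>x. F (\<Phi> x) \<partial>\<mu>1) - (\<integral>x. F (\<Phi> x) \<partial>\<mu>2)\<bar> \<le> 0 + e" if "0 < e" for e
  proof -
    have FS: "continuous_on S F" and e: "0 < e / 2"
      using F that by (auto intro: continuous_on_subset)
    obtain g where g: "real_polynomial_function g" "\<And>y. y \<in> S \<Longrightarrow> \<bar>F y - g y\<bar> < e / 2"
      by (rule Stone_Weierstrass_real_polynomial_function[OF \<Phi>(2) FS e]) blast
    show ?thesis
      using near[OF \<mu>(1,2) g] near[OF \<mu>(3,4) g] poly[OF g(1)] by linarith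
  qed
  have "\<bar>(\<integral>x. F (\<Phi> x) \<partial>\<mu>1) - (\<integral>x. F (\<Phi> x) \<partial>\<mu>2)\<bar> \<le> 0"
    by (rule field_le_epsilon) (rule approx)
  then show ?thesis by simp
qed

lemma tendsto_min_infdist_indicator:
  fixes y :: "'a::metric_space"
  assumes V: "open V" "V \<noteq> UNIV"
  shows "(\<lambda>n. min 1 (real n * infdist y (- V))) \<longlonglongrightarrow> indicator V y"
proof (cases "y \<in> V")
  case True
  have "infdist y (- V) \<noteq> 0"
    using True V in_closed_iff_infdist_zero[of "- V" y] by auto
  then have d: "0 < infdist y (- V)"
    using infdist_nonneg[of y "- V"] by linarith
  obtain N :: nat where N: "1 / infdist y (- V) < N"
    using reals_Archimedean2 by blast
  have "min 1 (real n * infdist y (- V)) = 1" if "N \<le> n" for n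
  proof -
    have "1 / infdist y (- V) < real n" using N that by linarith
    then show ?thesis using d by (simp add: field_simps)
  qed
  then have "eventually (\<lambda>n. min 1 (real n * infdist y (- V)) = 1) sequentially"
    unfolding eventually_sequentially by blast
  then show ?thesis using True by (simp add: tendsto_eventually)
next
  case False
  then show ?thesis by (simp add: infdist_zero)
qed

lemma measure_vimage_open_eq_if_integral_eq:
  fixes \<Phi> :: "'a::topological_space \<Rightarrow> 'b::metric_space"
  assumes \<mu>: "prob_space \<mu>1" "sets \<mu>1 = sets borel" "prob_space \<mu>2" "sets \<mu>2 = sets borel"
    and \<Phi>: "continuous_on UNIV \<Phi>"
    and int: "\<And>F :: 'b \<Rightarrow> real. continuous_on UNIV F \<Longrightarrow> (\<integral>x. F (\<Phi> x) \<partial>\<mu>1) = (\<integral>x. F (\<Phi> x) \<partial>\<mu>2)"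
    and V: "open V"
  shows "measure \<mu>1 (\<Phi> -` V) = measure \<mu>2 (\<Phi> -` V)"
proof (cases "V = UNIV")
  case True
  then show ?thesis
    using sets_eq_imp_space_eq[OF \<mu>(2)] sets_eq_imp_space_eq[OF \<mu>(4)]
      prob_space.prob_space[OF \<mu>(1)] prob_space.prob_space[OF \<mu>(3)] by simp
next
  case False
  define F where "F n y = min 1 (real n * infdist y (- V))" for n :: nat and y
  have F: "continuous_on UNIV (F n)" for n
    unfolding F_def by (intro continuous_intros)
  have lim: "(\<lambda>n. F n (\<Phi> x)) \<longlonglongrightarrow> indicator (\<Phi> -` V) x" for x
    using tendsto_min_infdist_indicator[OF V False, of "\<Phi> x"] by (simp add: F_def indicator_def)
  have conv: "(\<lambda>n. \<integral>x. F n (\<Phi> x) \<partial>\<mu>) \<longlonglongrightarrow> measure \<mu> (\<Phi> -` V)"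
    if "prob_space \<mu>" "sets \<mu> = sets borel" for \<mu>
  proof -
    interpret prob_space \<mu> by fact
    have space: "space \<mu> = UNIV" using sets_eq_imp_space_eq[OF that(2)] by simp
    have "open (\<Phi> -` V)"
      using \<Phi> V by (simp add: continuous_on_open_vimage)
    then have "\<Phi> -` V \<in> sets borel" by simp
    moreover have "(\<lambda>x. F n (\<Phi> x)) \<in> borel_measurable borel" for n
      using continuous_on_compose2[OF F \<Phi>] by (intro borel_measurable_continuous_onI) simp
    ultimately have "(\<lambda>n. \<integral>x. F n (\<Phi> x) \<partial>\<mu>) \<longlonglongrightarrow> (\<integral>x. indicator (\<Phi> -` V) x \<partial>\<mu>)"
      using lim that(2)
      by (intro integral_dominated_convergence[where w = "\<lambda>_. 1"])
         (auto simp: F_def infdist_nonneg measurable_cong_sets[OF that(2)])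
    then show ?thesis by (simp add: space)
  qed
  have "(\<lambda>n. \<integral>x. F n (\<Phi> x) \<partial>\<mu>1) = (\<lambda>n. \<integral>x. F n (\<Phi> x) \<partial>\<mu>2)"
    using int[OF F] by simp
  then show ?thesis
    using LIMSEQ_unique[OF conv[OF \<mu>(1,2)]] conv[OF \<mu>(3,4)] by simp
qed

lemma measure_torus_embedding_vimage_eq:
  fixes \<mu>1 \<mu>2 :: "'a::euclidean_space measure"
  assumes slices: "\<And>\<theta>. slice \<mu>1 \<theta> = slice \<mu>2 \<theta>"
    and \<mu>: "prob_space \<mu>1" "sets \<mu>1 = sets borel" "prob_space \<mu>2" "sets \<mu>2 = sets borel"
    and "open V"
  shows "measure \<mu>1 (torus_embedding c -` V) = measure \<mu>2 (torus_embedding c -` V)"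
proof (rule measure_vimage_open_eq_if_integral_eq[OF \<mu> continuous_on_torus_embedding _ \<open>open V\<close>])
  fix F :: "'a \<times> 'a \<Rightarrow> real"
  assume F: "continuous_on UNIV F"
  have "(\<integral>x. g (torus_embedding c x) \<partial>\<mu>1) = (\<integral>x. g (torus_embedding c x) \<partial>\<mu>2)"
    if "real_polynomial_function g" for g
    by (rule integral_trig_poly_eq[OF slices \<mu> polynomial_comp_torus_embedding[OF that]])
  then show "(\<integral>x. F (torus_embedding c x) \<partial>\<mu>1) = (\<integral>x. F (torus_embedding c x) \<partial>\<mu>2)"
    by (rule integral_continuous_comp_eq_if_polynomial[OF \<mu> continuous_on_torus_embedding
          compact_cball torus_embedding_in_cball _ F])
qed

lemma cos_half_width_less_iff:
  fixes A B X :: real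
  assumes "A < B" "- pi < A" "B < pi" "- pi < X" "X < pi"
  shows "cos ((B - A) / 2) < cos (X - (A + B) / 2) \<longleftrightarrow> A < X \<and> X < B"
proof -
  define h d where "h = (B - A) / 2" and "d = X - (A + B) / 2"
  have h: "0 < h" "h < pi"
    using assms by (auto simp: h_def)
  have "\<bar>d\<bar> + h < 2 * pi"
    using assms by (auto simp: h_def d_def abs_if field_simps)
  have "cos h < cos d \<longleftrightarrow> \<bar>d\<bar> < h"
  proof
    assume "\<bar>d\<bar> < h"
    then have "cos h < cos \<bar>d\<bar>" using h by (intro cos_monotone_0_pi) auto
    then show "cos h < cos d" by simp
  next
    assume less: "cos h < cos d"
    show "\<bar>d\<bar> < h"
    proof (rule ccontr)
      assume "\<not> \<bar>d\<bar> < h"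
      then have "cos d \<le> cos h"
      proof (cases "\<bar>d\<bar> \<le> pi")
        case True
        then have "cos \<bar>d\<bar> \<le> cos h"
          using h \<open>\<not> \<bar>d\<bar> < h\<close> by (intro cos_monotone_0_pi_le) auto
        then show ?thesis by simp
      next
        case False
        then have "cos (2 * pi - \<bar>d\<bar>) \<le> cos h"
          using h \<open>\<bar>d\<bar> + h < 2 * pi\<close> by (intro cos_monotone_0_pi_le) auto
        then show ?thesis by (simp add: cos_diff)
      qed
      with less show False by simp
    qed
  qed
  moreover have "\<bar>d\<bar> < h \<longleftrightarrow> A < X \<and> X < B"
    unfolding h_def d_def abs_less_iff by (auto simp: field_simps)
  ultimately show ?thesis by (simp add: h_def d_def)
qed

definition cube :: "nat \<Rightarrow> 'a::euclidean_space set" where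
  "cube n = box (- (real n *\<^sub>R One)) (real n *\<^sub>R One)"

lemma mem_cube: "x \<in> cube n \<longleftrightarrow> (\<forall>i\<in>Basis. \<bar>x \<bullet> i\<bar> < real n)"
  by (auto simp: cube_def mem_box abs_less_iff)

lemma tendsto_measure_compl_cube:
  fixes \<mu> :: "'a::euclidean_space measure"
  assumes "prob_space \<mu>" "sets \<mu> = sets borel"
  shows "(\<lambda>n. measure \<mu> (- cube n)) \<longlonglongrightarrow> 0"
proof -
  interpret prob_space \<mu> by fact
  have space: "space \<mu> = UNIV" using sets_eq_imp_space_eq[OF assms(2)] by simp
  have cube: "cube n \<in> sets \<mu>" for n using assms(2) by (simp add: cube_def)
  have "incseq cube"
  proof (rule incseq_SucI, rule subsetI)
    fix n x assume "x \<in> cube n"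
    then show "x \<in> cube (Suc n)" by (force simp: mem_cube)
  qed
  then have "(\<lambda>n. measure \<mu> (cube n)) \<longlonglongrightarrow> measure \<mu> (\<Union>n. cube n)"
    using cube by (intro finite_Lim_measure_incseq) auto
  also have "(\<Union>n. cube n) = UNIV" unfolding cube_def by (rule UN_box_eq_UNIV)
  finally have "(\<lambda>n. 1 - measure \<mu> (cube n)) \<longlonglongrightarrow> 1 - 1"
    using prob_space space by (intro tendsto_diff tendsto_const) simp
  moreover have "measure \<mu> (- cube n) = 1 - measure \<mu> (cube n)" for n
    using prob_compl[OF cube] space by (simp add: Compl_eq_Diff_UNIV)
  ultimately show ?thesis by simp
qed

text \<open>In the angular coordinates \<open>t\<^sub>i = c * x\<^sub>i\<close>, \<open>torus_arcs c a b\<close> cuts out the arcs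
  \<open>(c * a\<^sub>i, c * b\<^sub>i)\<close>: a point lies on such an arc iff the cosine of its angular distance to
  the midpoint exceeds the cosine of the half-width.\<close>

definition torus_arcs :: "real \<Rightarrow> 'a::euclidean_space \<Rightarrow> 'a \<Rightarrow> ('a \<times> 'a) set" where
  "torus_arcs c a b = (\<Inter>i\<in>Basis. {y. cos ((c * (b \<bullet> i) - c * (a \<bullet> i)) / 2)
      < fst y \<bullet> i * cos ((c * (a \<bullet> i) + c * (b \<bullet> i)) / 2)
        + snd y \<bullet> i * sin ((c * (a \<bullet> i) + c * (b \<bullet> i)) / 2)})"

lemma open_torus_arcs: "open (torus_arcs c a b)"
  unfolding torus_arcs_def
  by (intro open_INT ballI finite_Basis open_Collect_less continuous_intros)

lemma torus_embedding_in_torus_arcs_iff: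
  "torus_embedding c x \<in> torus_arcs c a b \<longleftrightarrow> (\<forall>i\<in>Basis.
     cos ((c * (b \<bullet> i) - c * (a \<bullet> i)) / 2) < cos (c * (x \<bullet> i) - (c * (a \<bullet> i) + c * (b \<bullet> i)) / 2))"
  by (auto simp: torus_arcs_def inner_torus_embedding cos_diff)

text \<open>For \<open>c = pi / n\<close> no angle wraps around on \<open>cube n\<close>, so there the preimage of
  \<open>torus_arcs c a b\<close> is exactly \<open>box a b\<close>.\<close>

lemma torus_embedding_vimage_torus_arcs:
  fixes a b :: "'a::euclidean_space" and n :: nat
  assumes ab: "\<forall>i\<in>Basis. a \<bullet> i < b \<bullet> i" and n: "norm a + norm b < real n"
  shows "box a b \<subseteq> torus_embedding (pi / n) -` torus_arcs (pi / n) a b"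
    and "torus_embedding (pi / n) -` torus_arcs (pi / n) a b \<subseteq> box a b \<union> - cube n"
proof -
  define c where "c = pi / real n"
  have "0 < real n" using n by (smt (verit) norm_ge_zero)
  then have c: "0 < c" "c * real n = pi" by (simp_all add: c_def)
  have angle: "- pi < c * (y \<bullet> i) \<and> c * (y \<bullet> i) < pi" if "\<bar>y \<bullet> i\<bar> < real n" for y i
  proof -
    have "c * \<bar>y \<bullet> i\<bar> < c * real n" using that c by (intro mult_strict_left_mono) auto
    then have "\<bar>c * (y \<bullet> i)\<bar> < pi" using c by (simp add: abs_mult)
    then show ?thesis by (simp add: abs_less_iff)
  qed
  have ab_bound: "\<bar>a \<bullet> i\<bar> < real n" "\<bar>b \<bullet> i\<bar> < real n" if "i \<in> Basis" for i
    using Basis_le_norm[OF that, of a] Basis_le_norm[OF that, of b] n by linarith+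
  have box_cube: "box a b \<subseteq> cube n"
  proof
    fix x assume "x \<in> box a b"
    then show "x \<in> cube n"
      using ab_bound by (fastforce simp: mem_cube mem_box abs_less_iff)
  qed
  have key: "torus_embedding c x \<in> torus_arcs c a b \<longleftrightarrow> x \<in> box a b" if "x \<in> cube n" for x
  proof -
    have "torus_embedding c x \<in> torus_arcs c a b
        \<longleftrightarrow> (\<forall>i\<in>Basis. c * (a \<bullet> i) < c * (x \<bullet> i) \<and> c * (x \<bullet> i) < c * (b \<bullet> i))"
      unfolding torus_embedding_in_torus_arcs_iff
      using that ab c angle[of a] angle[of b] angle[of x] ab_bound
      by (intro ball_cong cos_half_width_less_iff) (auto simp: mem_cube)
    also have "\<dots> \<longleftrightarrow> x \<in> box a b"
      using c by (simp add: mem_box)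
    finally show ?thesis .
  qed
  show "box a b \<subseteq> torus_embedding (pi / n) -` torus_arcs (pi / n) a b"
    unfolding c_def[symmetric]
  proof
    fix x assume x: "x \<in> box a b"
    with box_cube have "x \<in> cube n" by blast
    with key x show "x \<in> torus_embedding c -` torus_arcs c a b" by blast
  qed
  show "torus_embedding (pi / n) -` torus_arcs (pi / n) a b \<subseteq> box a b \<union> - cube n"
    unfolding c_def[symmetric]
  proof
    fix x assume x: "x \<in> torus_embedding c -` torus_arcs c a b"
    show "x \<in> box a b \<union> - cube n"
    proof (cases "x \<in> cube n")
      case True
      with key x show ?thesis by blast
    qed simp
  qed
qed

lemma measure_box_le:
  fixes \<mu>1 \<mu>2 :: "'a::euclidean_space measure"
  assumes \<mu>: "prob_space \<mu>1" "sets \<mu>1 = sets borel" "prob_space \<mu>2" "sets \<mu>2 = sets borel"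
    and vimage: "\<And>c V. open V \<Longrightarrow>
      measure \<mu>1 (torus_embedding c -` V) = measure \<mu>2 (torus_embedding c -` V)"
    and ab: "\<forall>i\<in>Basis. a \<bullet> i < b \<bullet> i"
  shows "measure \<mu>1 (box a b) \<le> measure \<mu>2 (box a b)"
proof -
  interpret \<mu>1: prob_space \<mu>1 by fact
  interpret \<mu>2: prob_space \<mu>2 by fact
  have le: "measure \<mu>1 (box a b) \<le> measure \<mu>2 (box a b) + measure \<mu>2 (- cube n)"
    if n: "norm a + norm b < real n" for n
  proof -
    define V where "V = torus_arcs (pi / n) a b"
    have V: "open V" "box a b \<subseteq> torus_embedding (pi / n) -` V"
        "torus_embedding (pi / n) -` V \<subseteq> box a b \<union> - cube n"
      unfolding V_def using open_torus_arcs torus_embedding_vimage_torus_arcs[OF ab n] by blast+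
    have "open (torus_embedding (pi / n) -` V :: 'a set)"
      using V(1) continuous_on_torus_embedding[of "pi / n", where 'a='a]
      by (simp add: continuous_on_open_vimage)
    then have sets: "torus_embedding (pi / n) -` V \<in> sets borel" "box a b \<in> sets borel"
      "- cube n \<in> sets borel"
      by (auto simp: cube_def)
    have "measure \<mu>1 (box a b) \<le> measure \<mu>1 (torus_embedding (pi / n) -` V)"
      using V(2) sets \<mu>(2) by (intro \<mu>1.finite_measure_mono) auto
    also have "\<dots> = measure \<mu>2 (torus_embedding (pi / n) -` V)"
      by (rule vimage[OF V(1)])
    also have "\<dots> \<le> measure \<mu>2 (box a b \<union> - cube n)"
      using V(3) sets \<mu>(4) by (intro \<mu>2.finite_measure_mono) auto
    also have "\<dots> \<le> measure \<mu>2 (box a b) + measure \<mu>2 (- cube n)"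
      using sets \<mu>(4) by (intro measure_Un_le) auto
    finally show ?thesis .
  qed
  obtain N :: nat where "norm a + norm b < N"
    using reals_Archimedean2 by blast
  then have "eventually (\<lambda>n. measure \<mu>1 (box a b) \<le> measure \<mu>2 (box a b) + measure \<mu>2 (- cube n))
      sequentially"
    unfolding eventually_sequentially by (meson le less_le_trans of_nat_le_iff)
  moreover have "(\<lambda>n. measure \<mu>2 (box a b) + measure \<mu>2 (- cube n)) \<longlonglongrightarrow> measure \<mu>2 (box a b) + 0"
    by (intro tendsto_add tendsto_const tendsto_measure_compl_cube \<mu>(3,4))
  ultimately show ?thesis
    using tendsto_le[OF trivial_limit_sequentially _ tendsto_const] by fastforce
qed

text \<open>Polynomials in \<open>torus_embedding c\<close> are trigonometric polynomials, whose integrals only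
  depend on the one-dimensional marginals; Stone-Weierstrass extends this to all continuous
  functions of \<open>torus_embedding c\<close>, hence to the preimages of open sets, which approximate
  every box.\<close>

theorem cramer_wold:
  fixes \<mu>1 \<mu>2 :: "'a::euclidean_space measure"
  assumes \<mu>: "prob_space \<mu>1" "sets \<mu>1 = sets borel" "prob_space \<mu>2" "sets \<mu>2 = sets borel"
    and "\<And>u. norm u = 1 \<Longrightarrow> slice \<mu>1 u = slice \<mu>2 u"
  shows "\<mu>1 = \<mu>2"
proof -
  interpret \<mu>1: prob_space \<mu>1 by fact
  interpret \<mu>2: prob_space \<mu>2 by fact
  have slices: "slice \<mu>1 \<theta> = slice \<mu>2 \<theta>" "slice \<mu>2 \<theta> = slice \<mu>1 \<theta>" for \<theta>
    using slice_eq_if_unit_slices_eq[OF assms(5) \<mu>(2,4)] by simp_all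
  have "measure \<mu>1 (box a b) = measure \<mu>2 (box a b)" if "\<forall>i\<in>Basis. a \<bullet> i < b \<bullet> i" for a b :: 'a
    using measure_box_le[OF \<mu> measure_torus_embedding_vimage_eq[OF slices(1) \<mu>] that]
      measure_box_le[OF \<mu>(3,4,1,2) measure_torus_embedding_vimage_eq[OF slices(2) \<mu>(3,4,1,2)] that]
    by simp
  then have box: "emeasure \<mu>1 (box a b) = emeasure \<mu>2 (box a b)" for a b :: 'a
    using box_ne_empty(2)[of a b]
    by (cases "box a b = {}") (auto simp: \<mu>1.emeasure_eq_measure \<mu>2.emeasure_eq_measure)
  show ?thesis
  proof (rule measure_eqI_generator_eq)
    let ?E = "range (\<lambda>(a, b). box a b :: 'a set)"
    let ?A = "\<lambda>n::nat. box (- (real n *\<^sub>R One)) (real n *\<^sub>R One) :: 'a set"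
    show "Int_stable ?E"
      by (auto simp: Int_stable_def box_Int_box)
    show "?E \<subseteq> Pow UNIV" "sets \<mu>1 = sigma_sets UNIV ?E" "sets \<mu>2 = sigma_sets UNIV ?E"
      by (simp_all add: borel_eq_box \<mu>(2,4))
    show "range ?A \<subseteq> ?E" "(\<Union>i. ?A i) = UNIV"
      unfolding UN_box_eq_UNIV by auto
    show "emeasure \<mu>1 (?A i) \<noteq> \<infinity>" for i
      by (simp add: \<mu>1.emeasure_eq_measure)
    show "emeasure \<mu>1 X = emeasure \<mu>2 X" if "X \<in> ?E" for X
      using that box by auto
  qed
qed

section \<open>The maximum \<open>K\<close>-sliced Wasserstein distance\<close>

lemma enn_root_0 [simp]: "enn_root p 0 = 0"
  by (simp add: enn_root_def)

lemma enn_root_eq_0_iff: "enn_root p x = 0 \<longleftrightarrow> x = 0"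
proof
  assume root: "enn_root p x = 0"
  then have "x \<noteq> \<infinity>" by (auto simp: enn_root_def)
  moreover from root this have "enn2real x = 0"
    by (auto simp: enn_root_def ennreal_eq_0_iff)
  ultimately show "x = 0" by (cases x) (auto simp: ennreal_eq_0_iff)
qed simp

lemma enn_root_mono:
  assumes "x \<le> y" "0 < p"
  shows "enn_root p x \<le> enn_root p y"
proof (cases "y = \<infinity>")
  case False
  then have "x \<noteq> \<infinity>" "enn2real x \<le> enn2real y"
    using assms by (auto simp: top_unique less_top intro!: enn2real_mono)
  then show ?thesis
    using assms False by (auto simp: enn_root_def intro!: ennreal_leI powr_mono2)
qed (simp add: enn_root_def)

lemma enn_root_eq_top_iff: "enn_root p x = top \<longleftrightarrow> x = top"
  by (simp add: enn_root_def)

text \<open>The triangle inequality for \<open>p\<close>-th roots, from Minkowski's inequality in the form of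
  \<open>Minkowski_sum_nn_integral\<close>; the weights there require \<open>a, b > 0\<close>, so the roots of
  \<open>S12\<close> and \<open>S23\<close> are approached from above.\<close>

lemma enn_root_triangle:
  assumes p: "1 \<le> p" and fin: "S12 \<noteq> \<infinity>" "S23 \<noteq> \<infinity>"
    and H: "\<And>a b. 0 < a \<Longrightarrow> 0 < b \<Longrightarrow> S12 \<le> ennreal (a powr p) \<Longrightarrow> S23 \<le> ennreal (b powr p)
              \<Longrightarrow> S13 \<le> ennreal ((a + b) powr p)"
  shows "enn_root p S13 \<le> enn_root p S12 + enn_root p S23"
proof -
  define A where "A = enn2real S12 powr (1 / p)"
  define B where "B = enn2real S23 powr (1 / p)"
  have AB: "0 \<le> A" "0 \<le> B" by (simp_all add: A_def B_def)
  have le_root: "S \<le> ennreal ((enn2real S powr (1 / p) + e) powr p)" if "S \<noteq> \<infinity>" "0 < e" for S e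
  proof -
    have "enn2real S = (enn2real S powr (1 / p)) powr p"
      using p by (simp add: powr_powr)
    also have "\<dots> \<le> (enn2real S powr (1 / p) + e) powr p"
      using p that by (intro powr_mono2) auto
    finally show ?thesis using that by (cases S) auto
  qed
  have S13: "S13 \<le> ennreal ((A + B + 2 * e) powr p)" if "0 < e" for e
  proof -
    have "S13 \<le> ennreal ((A + e + (B + e)) powr p)"
      using AB that
      by (intro H le_root[OF fin(1) that, folded A_def] le_root[OF fin(2) that, folded B_def]) auto
    then show ?thesis by (simp add: algebra_simps)
  qed
  then have "S13 \<noteq> \<infinity>"
    using S13[of 1] by (auto simp: top_unique)
  have approx: "enn2real S13 powr (1 / p) \<le> A + B + 2 * e" if "0 < e" for e
  proof -
    have "enn2real S13 \<le> (A + B + 2 * e) powr p"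
      using S13[OF that] \<open>S13 \<noteq> \<infinity>\<close> by (cases S13) auto
    then have "enn2real S13 powr (1 / p) \<le> ((A + B + 2 * e) powr p) powr (1 / p)"
      using p by (intro powr_mono2) auto
    also have "\<dots> = A + B + 2 * e" using p AB that by (simp add: powr_powr)
    finally show ?thesis .
  qed
  have "enn2real S13 powr (1 / p) \<le> A + B"
  proof (rule field_le_epsilon)
    fix e :: real
    assume "0 < e"
    then show "enn2real S13 powr (1 / p) \<le> A + B + e"
      using approx[of "e / 2"] by simp
  qed
  then show ?thesis
    using \<open>S13 \<noteq> \<infinity>\<close> fin AB by (simp add: enn_root_def A_def B_def flip: ennreal_plus del: ennreal_plus)
qed

lemma real_distribution_slice:
  assumes "prob_space \<mu>" "sets \<mu> = sets borel"
  shows "real_distribution (slice \<mu> \<theta>)"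
proof -
  interpret prob_space \<mu> by fact
  have "(\<lambda>x. x \<bullet> \<theta>) \<in> \<mu> \<rightarrow>\<^sub>M borel"
    by (subst measurable_cong_sets[OF assms(2) refl]) simp
  then show ?thesis
    unfolding real_distribution_def real_distribution_axioms_def slice_def
    by (simp add: prob_space_distr)
qed

lemma nn_integral_slice_powr_le:
  assumes "sets \<mu> = sets borel" "norm \<theta> = 1" "0 \<le> p"
  shows "(\<integral>\<^sup>+ x. ennreal (\<bar>x\<bar> powr p) \<partial>slice \<mu> \<theta>) \<le> (\<integral>\<^sup>+ x. ennreal (norm x powr p) \<partial>\<mu>)"
proof -
  have "(\<lambda>x. x \<bullet> \<theta>) \<in> \<mu> \<rightarrow>\<^sub>M borel"
    by (subst measurable_cong_sets[OF assms(1) refl]) simp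
  then have "(\<integral>\<^sup>+ x. ennreal (\<bar>x\<bar> powr p) \<partial>slice \<mu> \<theta>) = (\<integral>\<^sup>+ x. ennreal (\<bar>x \<bullet> \<theta>\<bar> powr p) \<partial>\<mu>)"
    unfolding slice_def by (simp add: nn_integral_distr)
  also have "\<dots> \<le> (\<integral>\<^sup>+ x. ennreal (norm x powr p) \<partial>\<mu>)"
  proof (intro nn_integral_mono ennreal_leI powr_mono2)
    show "\<bar>x \<bullet> \<theta>\<bar> \<le> norm x" for x
      using Cauchy_Schwarz_ineq2[of x \<theta>] assms(2) by simp
  qed (use assms(3) in auto)
  finally show ?thesis .
qed

lemma orthonormal_frame_norm:
  assumes "orthonormal_frame K \<theta>" "k < K"
  shows "norm (\<theta> k) = 1"
  using assms by (simp add: orthonormal_frame_def norm_eq_sqrt_inner)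

lemma orthonormal_frame_extend:
  fixes u :: "'a::euclidean_space"
  assumes u: "norm u = 1" and K: "K \<le> DIM('a)"
  obtains \<theta> where "orthonormal_frame K \<theta>" "\<theta> 0 = u"
proof -
  obtain S where S: "u \<in> S" "pairwise orthogonal S" "\<And>x. x \<in> S \<Longrightarrow> norm x = 1"
      "card S = DIM('a)"
    by (rule vector_in_orthonormal_basis[OF u]) blast
  then have "finite S" using card_ge_0_finite[of S] by simp
  then obtain g where g: "bij_betw g {0..<card (S - {u})} (S - {u})"
    using ex_bij_betw_nat_finite by blast
  have card: "card (S - {u}) = DIM('a) - 1"
    using S(1,4) \<open>finite S\<close> by simp
  define \<theta> where "\<theta> i = (if i = 0 then u else g (i - 1))" for i
  have g_in: "g (i - 1) \<in> S - {u}" if "i < DIM('a)" "i \<noteq> 0" for i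
    using that bij_betwE[OF g] card by simp
  have \<theta>S: "\<theta> i \<in> S" if "i < DIM('a)" for i
    using that S(1) g_in by (simp add: \<theta>_def)
  have \<theta>_inj: "\<theta> i \<noteq> \<theta> j" if "i < DIM('a)" "j < DIM('a)" "i \<noteq> j" for i j
  proof (cases "i = 0 \<or> j = 0")
    case True
    then show ?thesis using that g_in by (auto simp: \<theta>_def)
  next
    case False
    have "i - 1 \<in> {0..<card (S - {u})}" "j - 1 \<in> {0..<card (S - {u})}" "i - 1 \<noteq> j - 1"
      using that False card by auto
    then have "g (i - 1) \<noteq> g (j - 1)"
      using inj_onD[OF bij_betw_imp_inj_on[OF g]] by blast
    then show ?thesis using False by (simp add: \<theta>_def)
  qed
  have "\<theta> i \<bullet> \<theta> j = (if i = j then 1 else 0)" if "i < K" "j < K" for i j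
  proof (cases "i = j")
    case True
    then show ?thesis using S(3)[OF \<theta>S] that K by (simp add: dot_square_norm)
  next
    case False
    then have "orthogonal (\<theta> i) (\<theta> j)"
      using S(2) \<theta>S \<theta>_inj that K by (simp add: pairwise_def)
    then show ?thesis using False by (simp add: orthogonal_def)
  qed
  then have "orthonormal_frame K \<theta>"
    by (simp add: orthonormal_frame_def)
  then show ?thesis by (rule that) (simp add: \<theta>_def)
qed

definition sliced_cost ::
    "nat \<Rightarrow> real \<Rightarrow> 'a::euclidean_space measure \<Rightarrow> 'a measure \<Rightarrow> (nat \<Rightarrow> 'a) \<Rightarrow> ennreal" where
  "sliced_cost K p \<mu> \<nu> \<theta> = (\<Sum>k<K. Wpp p (slice \<mu> (\<theta> k)) (slice \<nu> (\<theta> k))) / of_nat K"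

lemma max_K_SW_eq_SUP_sliced_cost:
  "max_K_SW K p \<mu> \<nu> = (SUP \<theta>\<in>{\<theta>. orthonormal_frame K \<theta>}. enn_root p (sliced_cost K p \<mu> \<nu> \<theta>))"
  by (simp add: max_K_SW_def sliced_cost_def)

lemma real_distribution_slice_P_p: "\<mu> \<in> P_p p \<Longrightarrow> real_distribution (slice \<mu> \<theta>)"
  by (simp add: P_p_def real_distribution_slice)

lemma sliced_cost_commute:
  assumes "1 \<le> p" "\<mu> \<in> P_p p" "\<nu> \<in> P_p p"
  shows "sliced_cost K p \<mu> \<nu> \<theta> = sliced_cost K p \<nu> \<mu> \<theta>"
  using assms by (simp add: sliced_cost_def Wpp_commute real_distribution_slice_P_p)

lemma sliced_cost_self:
  assumes "1 \<le> p" "\<mu> \<in> P_p p"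
  shows "sliced_cost K p \<mu> \<mu> \<theta> = 0"
  using assms by (simp add: sliced_cost_def Wpp_self real_distribution_slice_P_p)

lemma sliced_cost_eq_0_imp_slice_eq:
  assumes "1 \<le> p" "\<mu> \<in> P_p p" "\<nu> \<in> P_p p" "sliced_cost K p \<mu> \<nu> \<theta> = 0" "k < K"
  shows "slice \<mu> (\<theta> k) = slice \<nu> (\<theta> k)"
proof -
  have "(\<Sum>k<K. Wpp p (slice \<mu> (\<theta> k)) (slice \<nu> (\<theta> k))) = 0"
    using assms(4,5) by (simp add: sliced_cost_def ennreal_divide_eq_0_iff)
  then have "Wpp p (slice \<mu> (\<theta> k)) (slice \<nu> (\<theta> k)) = 0"
    using assms(5) by simp
  then show ?thesis
    using assms(1-3) by (simp add: Wpp_eq_0_imp_eq real_distribution_slice_P_p)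
qed

lemma sliced_cost_le_moments:
  assumes p: "1 \<le> p" and \<mu>: "\<mu> \<in> P_p p" and \<nu>: "\<nu> \<in> P_p p"
    and K: "1 \<le> K" and \<theta>: "orthonormal_frame K \<theta>"
  shows "sliced_cost K p \<mu> \<nu> \<theta> \<le> ennreal (2 powr (p - 1))
           * ((\<integral>\<^sup>+ x. ennreal (norm x powr p) \<partial>\<mu>) + (\<integral>\<^sup>+ x. ennreal (norm x powr p) \<partial>\<nu>))"
    (is "_ \<le> ?B")
proof -
  have "Wpp p (slice \<mu> (\<theta> k)) (slice \<nu> (\<theta> k)) \<le> ?B" if "k < K" for k
  proof -
    have "norm (\<theta> k) = 1" by (rule orthonormal_frame_norm[OF \<theta> that])
    then show ?thesis
      using \<mu> \<nu> p unfolding P_p_def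
      by (intro order_trans[OF Wpp_le_moments] mult_left_mono add_mono nn_integral_slice_powr_le)
         (simp_all add: real_distribution_slice)
  qed
  then have "(\<Sum>k<K. Wpp p (slice \<mu> (\<theta> k)) (slice \<nu> (\<theta> k))) \<le> of_nat K * ?B"
    using sum_mono[of "{..<K}" _ "\<lambda>_. ?B"] by simp
  then have "sliced_cost K p \<mu> \<nu> \<theta> \<le> of_nat K * ?B / of_nat K"
    unfolding sliced_cost_def by (rule divide_right_mono_ennreal)
  also have "\<dots> = ?B"
    using K by (simp add: ennreal_mult_divide_eq mult.commute[of "of_nat K"])
  finally show ?thesis .
qed

lemma sliced_cost_less_top:
  assumes "1 \<le> p" "\<mu> \<in> P_p p" "\<nu> \<in> P_p p" "1 \<le> K" "orthonormal_frame K \<theta>"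
  shows "sliced_cost K p \<mu> \<nu> \<theta> < \<infinity>"
  using sliced_cost_le_moments[OF assms] assms(2,3)
  by (auto simp: P_p_def ennreal_mult_less_top order.strict_trans1)

lemma sliced_cost_triangle:
  assumes p: "1 \<le> p" and \<mu>: "\<mu>1 \<in> P_p p" "\<mu>2 \<in> P_p p" "\<mu>3 \<in> P_p p"
    and a: "0 < a" and b: "0 < b"
    and "sliced_cost K p \<mu>1 \<mu>2 \<theta> \<le> ennreal (a powr p)"
    and "sliced_cost K p \<mu>2 \<mu>3 \<theta> \<le> ennreal (b powr p)"
  shows "sliced_cost K p \<mu>1 \<mu>3 \<theta> \<le> ennreal ((a + b) powr p)"
proof -
  let ?q = "\<lambda>\<mu> k. quantile (slice \<mu> (\<theta> k))"
  have cost: "sliced_cost K p \<mu> \<nu> \<theta> = inverse (of_nat K)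
      * (\<Sum>k<K. \<integral>\<^sup>+ u. ennreal (\<bar>?q \<mu> k u - ?q \<nu> k u\<bar> powr p) \<partial>uniform01)"
    if "\<mu> \<in> P_p p" "\<nu> \<in> P_p p" for \<mu> \<nu>
    using that by (simp add: sliced_cost_def divide_ennreal_def mult.commute
        Wpp_eq_nn_integral_quantile[OF p] real_distribution_slice_P_p)
  have [measurable]: "?q \<mu> k \<in> borel_measurable uniform01" if "\<mu> \<in> P_p p" for \<mu> k
    using that by (simp add: real_distribution_slice_P_p)
  have "inverse (of_nat K) * (\<Sum>k<K. \<integral>\<^sup>+ u. ennreal
      (\<bar>(?q \<mu>1 k u - ?q \<mu>2 k u) + (?q \<mu>2 k u - ?q \<mu>3 k u)\<bar> powr p) \<partial>uniform01)
      \<le> ennreal ((a + b) powr p)"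
    using assms by (intro Minkowski_sum_nn_integral) (simp_all add: cost)
  then show ?thesis
    using \<mu> by (simp add: cost)
qed

lemma max_K_SW_less_top:
  assumes p: "1 \<le> p" and \<mu>: "\<mu> \<in> P_p p" and \<nu>: "\<nu> \<in> P_p p" and K: "1 \<le> K"
  shows "max_K_SW K p \<mu> \<nu> < \<infinity>"
proof -
  define B where "B = ennreal (2 powr (p - 1))
    * ((\<integral>\<^sup>+ x. ennreal (norm x powr p) \<partial>\<mu>) + (\<integral>\<^sup>+ x. ennreal (norm x powr p) \<partial>\<nu>))"
  have "max_K_SW K p \<mu> \<nu> \<le> enn_root p B"
    unfolding max_K_SW_eq_SUP_sliced_cost B_def
    using p by (intro SUP_least enn_root_mono sliced_cost_le_moments[OF p \<mu> \<nu> K]) auto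
  also have "\<dots> < \<infinity>"
    using \<mu> \<nu> by (simp add: enn_root_eq_top_iff B_def P_p_def ennreal_mult_eq_top_iff flip: less_top)
  finally show ?thesis .
qed

lemma max_K_SW_commute:
  assumes "1 \<le> p" "\<mu> \<in> P_p p" "\<nu> \<in> P_p p"
  shows "max_K_SW K p \<mu> \<nu> = max_K_SW K p \<nu> \<mu>"
  using assms by (simp add: max_K_SW_eq_SUP_sliced_cost sliced_cost_commute)

lemma max_K_SW_self:
  assumes "1 \<le> p" "\<mu> \<in> P_p p"
  shows "max_K_SW K p \<mu> \<mu> = 0"
  using assms by (simp add: max_K_SW_eq_SUP_sliced_cost sliced_cost_self) (simp flip: bot_ennreal)

lemma max_K_SW_eq_0_imp_eq:
  fixes \<mu> \<nu> :: "'a::euclidean_space measure"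
  assumes p: "1 \<le> p" and \<mu>: "\<mu> \<in> P_p p" and \<nu>: "\<nu> \<in> P_p p"
    and K: "1 \<le> K" "K \<le> DIM('a)" and 0: "max_K_SW K p \<mu> \<nu> = 0"
  shows "\<mu> = \<nu>"
proof (rule cramer_wold)
  show "prob_space \<mu>" "sets \<mu> = sets borel" "prob_space \<nu>" "sets \<nu> = sets borel"
    using \<mu> \<nu> by (simp_all add: P_p_def)
  fix u :: 'a
  assume "norm u = 1"
  then obtain \<theta> where \<theta>: "orthonormal_frame K \<theta>" "\<theta> 0 = u"
    using orthonormal_frame_extend K(2) by blast
  have "enn_root p (sliced_cost K p \<mu> \<nu> \<theta>) \<le> max_K_SW K p \<mu> \<nu>"
    unfolding max_K_SW_eq_SUP_sliced_cost using \<theta>(1) by (intro SUP_upper) simp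
  then have "sliced_cost K p \<mu> \<nu> \<theta> = 0"
    using 0 by (simp add: enn_root_eq_0_iff)
  then show "slice \<mu> u = slice \<nu> u"
    using sliced_cost_eq_0_imp_slice_eq[OF p \<mu> \<nu>, of K \<theta> 0] K \<theta>(2) by simp
qed

lemma max_K_SW_triangle:
  fixes \<mu>1 \<mu>2 \<mu>3 :: "'a::euclidean_space measure"
  assumes p: "1 \<le> p" and \<mu>: "\<mu>1 \<in> P_p p" "\<mu>2 \<in> P_p p" "\<mu>3 \<in> P_p p" and K: "1 \<le> K"
  shows "max_K_SW K p \<mu>1 \<mu>3 \<le> max_K_SW K p \<mu>1 \<mu>2 + max_K_SW K p \<mu>2 \<mu>3"
  unfolding max_K_SW_eq_SUP_sliced_cost[of K p \<mu>1 \<mu>3]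
proof (rule SUP_least)
  fix \<theta> :: "nat \<Rightarrow> 'a"
  assume "\<theta> \<in> {\<theta>. orthonormal_frame K \<theta>}"
  then have \<theta>: "orthonormal_frame K \<theta>" by simp
  have "enn_root p (sliced_cost K p \<mu>1 \<mu>3 \<theta>)
      \<le> enn_root p (sliced_cost K p \<mu>1 \<mu>2 \<theta>) + enn_root p (sliced_cost K p \<mu>2 \<mu>3 \<theta>)"
    using sliced_cost_less_top[OF p \<mu>(1,2) K \<theta>] sliced_cost_less_top[OF p \<mu>(2,3) K \<theta>]
    by (intro enn_root_triangle[OF p] sliced_cost_triangle[OF p \<mu>]) simp_all
  also have "\<dots> \<le> max_K_SW K p \<mu>1 \<mu>2 + max_K_SW K p \<mu>2 \<mu>3"
    unfolding max_K_SW_eq_SUP_sliced_cost using \<theta> by (intro add_mono SUP_upper) simp_all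
  finally show "enn_root p (sliced_cost K p \<mu>1 \<mu>3 \<theta>) \<le> max_K_SW K p \<mu>1 \<mu>2 + max_K_SW K p \<mu>2 \<mu>3" .
qed

theorem proposition1:
  fixes K :: nat and p :: real and \<mu>1 \<mu>2 \<mu>3 :: "'a::euclidean_space measure"
  assumes "1 \<le> K" and "K \<le> DIM('a)" and "1 \<le> p"
    and "\<mu>1 \<in> P_p p" and "\<mu>2 \<in> P_p p" and "\<mu>3 \<in> P_p p"
  shows "max_K_SW K p \<mu>1 \<mu>2 < \<infinity>
    \<and> (max_K_SW K p \<mu>1 \<mu>2 = 0 \<longleftrightarrow> \<mu>1 = \<mu>2)
    \<and> max_K_SW K p \<mu>1 \<mu>2 = max_K_SW K p \<mu>2 \<mu>1
    \<and> max_K_SW K p \<mu>1 \<mu>3 \<le> max_K_SW K p \<mu>1 \<mu>2 + max_K_SW K p \<mu>2 \<mu>3"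
  using max_K_SW_less_top[OF assms(3,4,5,1)] max_K_SW_eq_0_imp_eq[OF assms(3,4,5,1,2)]
    max_K_SW_self[OF assms(3,4)] max_K_SW_commute[OF assms(3,4,5)]
    max_K_SW_triangle[OF assms(3-6,1)]
  by auto

end
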